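(* Let $\Gamma$ be a metrized graph with $v$ vertices. Then $$(v-2)\, r(\Gamma)= \sum_{e_i \in E(\Gamma)} \frac{R_i}{L_i+R_i}\, r(\overline{\Gamma}_i),\qquad\text{where } r(\Gamma):=\sum_{e_i \in E(\Gamma)}\frac{L_i R_i}{L_i+R_i}.$$
   Context: A metrized graph $\Gamma$ is a finite connected graph (multiple edges and self-loops allowed) each of whose edges is identified with a closed segment of positive length, with a finite nonempty vertex set $V(\Gamma)$ containing every point of valence $\neq2$; $v=\#V(\Gamma)$, $E(\Gamma)$ its edge set, $L_i$ the length of $e_i$. For an edge $e_i$ with end points $p_i,q_i$, $R_i$ is the effective resistance between $p_i$ and $q_i$ in $\Gamma-e_i$ (interior of $e_i$ deleted; edges as resistors of resistance equal to length); $R_i=0$ for a self-loop; if $e_i$ is a bridge, every expression involving $R_i$ is interpreted as its limit as $R_i\to\infty$ (so its term in $r(\Gamma)$ is $L_i$ and $R_i/(L_i+R_i)=1$). $\overline\Gamma_i$ is the metrized graph obtained by contracting $e_i$ to a point, with vertex set the image of $V(\Gamma)$; $r(\overline\Gamma_i)$ is computed in $\overline\Gamma_i$. *)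

theory Defs
  imports Complex_Main
begin

text \<open>A metrized graph is modelled by a finite vertex set V, a finite edge index set E,
  an endpoint map ends (ends e = (p_e, q_e); p_e = q_e for a self-loop) and edge lengths L.\<close>

definition adj_rel :: "'e set \<Rightarrow> ('e \<Rightarrow> 'v \<times> 'v) \<Rightarrow> 'v \<Rightarrow> 'v \<Rightarrow> bool" where
  "adj_rel E ends x y \<longleftrightarrow> (\<exists>e\<in>E. ends e = (x, y) \<or> ends e = (y, x))"

definition reachable :: "'e set \<Rightarrow> ('e \<Rightarrow> 'v \<times> 'v) \<Rightarrow> 'v \<Rightarrow> 'v \<Rightarrow> bool" where
  "reachable E ends x y \<longleftrightarrow> (adj_rel E ends)\<^sup>*\<^sup>* x y"

definition metrized_graph ::
  "'v set \<Rightarrow> 'e set \<Rightarrow> ('e \<Rightarrow> 'v \<times> 'v) \<Rightarrow> ('e \<Rightarrow> real) \<Rightarrow> bool" where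
  "metrized_graph V E ends L \<longleftrightarrow>
     finite V \<and> V \<noteq> {} \<and> finite E \<and>
     (\<forall>e\<in>E. fst (ends e) \<in> V \<and> snd (ends e) \<in> V \<and> L e > 0) \<and>
     (\<forall>x\<in>V. \<forall>y\<in>V. reachable E ends x y)"

text \<open>Dirichlet energy of a potential f on the resistor network (edge resistance = length).\<close>
definition energy :: "'e set \<Rightarrow> ('e \<Rightarrow> 'v \<times> 'v) \<Rightarrow> ('e \<Rightarrow> real) \<Rightarrow> ('v \<Rightarrow> real) \<Rightarrow> real" where
  "energy E ends L f = (\<Sum>e\<in>E. (f (fst (ends e)) - f (snd (ends e)))\<^sup>2 / L e)"

text \<open>Effective resistance between p and q (Dirichlet principle: the effective conductance is
  the minimal energy of a potential that is 1 at p and 0 at q). Meaningful when p, q are connected.\<close>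
definition eff_res :: "'e set \<Rightarrow> ('e \<Rightarrow> 'v \<times> 'v) \<Rightarrow> ('e \<Rightarrow> real) \<Rightarrow> 'v \<Rightarrow> 'v \<Rightarrow> real" where
  "eff_res E ends L p q =
     (if p = q then 0 else 1 / Inf {energy E ends L f | f. f p = 1 \<and> f q = 0})"

text \<open>The factor R_i/(L_i+R_i), where R_i is the effective resistance between the endpoints
  of e in the graph with e deleted; equal to 1 (limit R_i \<rightarrow> \<infinity>) when e is a bridge.\<close>
definition res_ratio :: "'e set \<Rightarrow> ('e \<Rightarrow> 'v \<times> 'v) \<Rightarrow> ('e \<Rightarrow> real) \<Rightarrow> 'e \<Rightarrow> real" where
  "res_ratio E ends L e =
     (let p = fst (ends e); q = snd (ends e) in
      if reachable (E - {e}) ends p q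
      then eff_res (E - {e}) ends L p q / (L e + eff_res (E - {e}) ends L p q)
      else 1)"

definition r_inv :: "'e set \<Rightarrow> ('e \<Rightarrow> 'v \<times> 'v) \<Rightarrow> ('e \<Rightarrow> real) \<Rightarrow> real" where
  "r_inv E ends L = (\<Sum>e\<in>E. L e * res_ratio E ends L e)"

definition contract_vertex :: "('e \<Rightarrow> 'v \<times> 'v) \<Rightarrow> 'e \<Rightarrow> 'v \<Rightarrow> 'v" where
  "contract_vertex ends e x = (if x = snd (ends e) then fst (ends e) else x)"

definition contract_ends :: "('e \<Rightarrow> 'v \<times> 'v) \<Rightarrow> 'e \<Rightarrow> ('e \<Rightarrow> 'v \<times> 'v)" where
  "contract_ends ends e = (\<lambda>d. map_prod (contract_vertex ends e) (contract_vertex ends e) (ends d))"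

text \<open>The contracted graph has vertex set contract_vertex ends e ` V, edge set E - {e},
  endpoint map contract_ends ends e and the same lengths.\<close>

end

theory Submission
  imports Defs "HOL-Combinatorics.Permutations"
begin

text \<open>Write \<open>\<kappa>(G)\<close> for the Laplacian determinant of \<open>G\<close> with conductances \<open>1 / L\<close>, reduced at
  one vertex (by the matrix-tree theorem, the weighted number of spanning trees). Eliminating
  vertices one at a time (star-mesh transform, that is, Schur complements) shows that the effective
  resistance between the end points of a non-loop edge \<open>e\<close> in \<open>G - e\<close> is \<open>\<kappa>(G/e) / \<kappa>(G - e)\<close>.
  Together with deletion-contraction \<open>\<kappa>(G) = \<kappa>(G - e) + \<kappa>(G/e) / L\<^sub>e\<close> this gives
  \<open>R\<^sub>e / (L\<^sub>e + R\<^sub>e) = \<kappa>(G/e) / (L\<^sub>e \<kappa>(G))\<close>, bridges included, hence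
  \<open>r(G) = \<Sum>\<^sub>e \<kappa>(G/e) / \<kappa>(G)\<close>. So the right-hand side is \<open>\<kappa>(G)\<inverse> \<Sum>\<^sub>e \<Sum>\<^sub>f \<kappa>(G/e/f) / L\<^sub>e\<close>,
  summed over the ordered pairs of edges that remain non-loops. Contractions commute; exchanging the
  two sums and applying the weighted Foster identity \<open>\<Sum>\<^sub>e \<kappa>(H/e) / L\<^sub>e = (#V(H) - 1) \<kappa>(H)\<close>,
  itself proved by induction on the edges via deletion-contraction, to \<open>H = G/f\<close> with its
  \<open>v - 1\<close> vertices leaves \<open>(v - 2) \<Sum>\<^sub>f \<kappa>(G/f) / \<kappa>(G) = (v - 2) r(G)\<close>.\<close>

section \<open>Determinants of matrices indexed by a finite set\<close>

definition det_on :: "'a set \<Rightarrow> ('a \<Rightarrow> 'a \<Rightarrow> real) \<Rightarrow> real" where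
  "det_on S M = (\<Sum>p\<in>{p. p permutes S}. of_int (sign p) * (\<Prod>i\<in>S. M i (p i)))"

definition row_update :: "('a \<Rightarrow> 'a \<Rightarrow> real) \<Rightarrow> 'a \<Rightarrow> ('a \<Rightarrow> real) \<Rightarrow> 'a \<Rightarrow> 'a \<Rightarrow> real" where
  "row_update M k r = (\<lambda>i. if i = k then r else M i)"

lemma det_on_cong:
  assumes "\<And>i j. i \<in> S \<Longrightarrow> j \<in> S \<Longrightarrow> M i j = N i j"
  shows "det_on S M = det_on S N"
  unfolding det_on_def
proof (intro sum.cong refl)
  fix p assume "p \<in> {p. p permutes S}"
  then have "(\<Prod>i\<in>S. M i (p i)) = (\<Prod>i\<in>S. N i (p i))"
    using assms permutes_in_image by (intro prod.cong) fastforce+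
  then show "of_int (sign p) * (\<Prod>i\<in>S. M i (p i)) = of_int (sign p) * (\<Prod>i\<in>S. N i (p i))"
    by simp
qed

lemma det_on_empty [simp]: "det_on {} M = 1"
  unfolding det_on_def by simp

lemma det_on_singleton [simp]: "det_on {a} M = M a a"
  unfolding det_on_def by simp

lemma permutes_fixing_eq:
  assumes "k \<in> S"
  shows "{p. p permutes S \<and> p k = k} = {p. p permutes (S - {k})}"
proof -
  have "p permutes (S - {k})" if "p permutes S" "p k = k" for p
    using that unfolding permutes_def by auto
  moreover have "p permutes S \<and> p k = k" if "p permutes (S - {k})" for p
    using that permutes_subset[OF that] unfolding permutes_def by auto
  ultimately show ?thesis by blast
qed

lemma det_on_split_fixing:
  assumes fin: "finite S" and k: "k \<in> S"
  shows "det_on S M = M k k * det_on (S - {k}) M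
     + (\<Sum>p\<in>{p. p permutes S \<and> p k \<noteq> k}. of_int (sign p) * (\<Prod>i\<in>S. M i (p i)))"
proof -
  let ?t = "\<lambda>p. of_int (sign p) * (\<Prod>i\<in>S. M i (p i))"
  have "det_on S M = sum ?t ({p. p permutes S} \<inter> {p. p k = k}) + sum ?t ({p. p permutes S} - {p. p k = k})"
    unfolding det_on_def using sum.Int_Diff[OF finite_permutations[OF fin]] by blast
  moreover have "sum ?t ({p. p permutes S} - {p. p k = k}) = sum ?t {p. p permutes S \<and> p k \<noteq> k}"
    by (intro sum.cong) auto
  moreover have "sum ?t ({p. p permutes S} \<inter> {p. p k = k}) = sum ?t {p. p permutes (S - {k})}"
    using permutes_fixing_eq[OF k] by (metis Collect_conj_eq)
  moreover have "\<dots> = (\<Sum>p\<in>{p. p permutes (S - {k})}. M k k * (of_int (sign p) * (\<Prod>i\<in>S-{k}. M i (p i))))"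
  proof (intro sum.cong refl)
    fix p assume "p \<in> {p. p permutes (S - {k})}"
    then have "p k = k" unfolding permutes_def by auto
    then show "?t p = M k k * (of_int (sign p) * (\<Prod>i\<in>S-{k}. M i (p i)))"
      using prod.remove[OF fin k, of "\<lambda>i. M i (p i)"] by simp
  qed
  ultimately show ?thesis
    unfolding det_on_def by (simp add: sum_distrib_left)
qed

lemma det_on_row_diag:
  assumes fin: "finite S" and k: "k \<in> S" and z: "\<And>j. j \<in> S \<Longrightarrow> j \<noteq> k \<Longrightarrow> M k j = 0"
  shows "det_on S M = M k k * det_on (S - {k}) M"
proof -
  have "(\<Sum>p\<in>{p. p permutes S \<and> p k \<noteq> k}. of_int (sign p) * (\<Prod>i\<in>S. M i (p i))) = 0"
  proof (rule sum.neutral, safe)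
    fix p assume p: "p permutes S" "p k \<noteq> k"
    then have "M k (p k) = 0" using z permutes_in_image k by metis
    then have "(\<Prod>i\<in>S. M i (p i)) = 0" using fin k by (auto simp: prod_zero_iff)
    then show "of_int (sign p) * (\<Prod>i\<in>S. M i (p i)) = 0" by simp
  qed
  then show ?thesis using det_on_split_fixing[OF fin k, of M] by simp
qed

lemma det_on_col_diag:
  assumes fin: "finite S" and k: "k \<in> S" and z: "\<And>j. j \<in> S \<Longrightarrow> j \<noteq> k \<Longrightarrow> M j k = 0"
  shows "det_on S M = M k k * det_on (S - {k}) M"
proof -
  have "(\<Sum>p\<in>{p. p permutes S \<and> p k \<noteq> k}. of_int (sign p) * (\<Prod>i\<in>S. M i (p i))) = 0"
  proof (rule sum.neutral, safe)
    fix p assume p: "p permutes S" "p k \<noteq> k"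
    let ?j = "inv p k"
    have j: "?j \<in> S" using p(1) k by (simp add: permutes_inv permutes_in_image)
    have pj: "p ?j = k" using p(1) by (meson permutes_inverses(1))
    then have "?j \<noteq> k" using p(2) by auto
    then have "M ?j (p ?j) = 0" using z j pj by simp
    then have "(\<Prod>i\<in>S. M i (p i)) = 0" using fin j by (auto simp: prod_zero_iff)
    then show "of_int (sign p) * (\<Prod>i\<in>S. M i (p i)) = 0" by simp
  qed
  then show ?thesis using det_on_split_fixing[OF fin k, of M] by simp
qed

lemma det_on_zero_row:
  assumes "finite S" "k \<in> S" "\<And>j. j \<in> S \<Longrightarrow> M k j = 0"
  shows "det_on S M = 0"
  using det_on_row_diag[OF assms(1,2)] assms(2,3) by simp

lemma det_on_eq_rows:
  assumes fin: "finite S" and k: "k \<in> S" and l: "l \<in> S" and kl: "k \<noteq> l"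
    and eq: "\<And>j. j \<in> S \<Longrightarrow> M k j = M l j"
  shows "det_on S M = 0"
proof -
  let ?t = "Transposition.transpose k l"
  have t: "?t permutes S" using permutes_swap_id[OF k l] .
  have rows: "M (?t i) j = M i j" if "j \<in> S" for i j
    using eq[OF that] by (auto simp: Transposition.transpose_def)
  have "det_on S M = (\<Sum>p\<in>{p. p permutes S}. of_int (sign (p \<circ> ?t)) * (\<Prod>i\<in>S. M i ((p \<circ> ?t) i)))"
    unfolding det_on_def by (rule sum_permutations_compose_right[OF t])
  also have "\<dots> = (\<Sum>p\<in>{p. p permutes S}. - (of_int (sign p) * (\<Prod>i\<in>S. M i (p i))))"
  proof (intro sum.cong refl)
    fix p assume "p \<in> {p. p permutes S}"
    then have p: "p permutes S" by simp
    have sg: "sign (p \<circ> ?t) = - sign p"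
      using sign_compose[of p ?t] permutation_permutes fin p t sign_swap_id[of k l] kl by auto
    have "(\<Prod>i\<in>S. M i ((p \<circ> ?t) i)) = (\<Prod>i\<in>S. M (?t i) (p (?t i)))"
      using rows permutes_in_image[OF p] permutes_in_image[OF t] by (intro prod.cong) auto
    also have "\<dots> = (\<Prod>i\<in>S. M i (p i))"
      using prod.permute[OF t, of "\<lambda>i. M i (p i)"] by (simp add: comp_def)
    finally show "of_int (sign (p \<circ> ?t)) * (\<Prod>i\<in>S. M i ((p \<circ> ?t) i))
        = - (of_int (sign p) * (\<Prod>i\<in>S. M i (p i)))"
      using sg by simp
  qed
  also have "\<dots> = - det_on S M" unfolding det_on_def by (simp add: sum_negf)
  finally show ?thesis by simp
qed

lemma det_on_row_linear:
  assumes fin: "finite S" and k: "k \<in> S"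
  shows "det_on S (row_update M k (\<lambda>j. u j + t * w j))
       = det_on S (row_update M k u) + t * det_on S (row_update M k w)"
proof -
  have row: "(\<Prod>i\<in>S. row_update M k r i (p i)) = r (p k) * (\<Prod>i\<in>S-{k}. M i (p i))" for r p
  proof -
    have "(\<Prod>i\<in>S. row_update M k r i (p i))
        = row_update M k r k (p k) * (\<Prod>i\<in>S-{k}. row_update M k r i (p i))"
      by (rule prod.remove[OF fin k])
    also have "(\<Prod>i\<in>S-{k}. row_update M k r i (p i)) = (\<Prod>i\<in>S-{k}. M i (p i))"
      by (rule prod.cong) (auto simp: row_update_def)
    finally show ?thesis by (simp add: row_update_def)
  qed
  show ?thesis
    unfolding det_on_def row by (simp add: algebra_simps sum.distrib sum_distrib_left)
qed

lemma det_on_row_add: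
  assumes fin: "finite S" and k: "k \<in> S" and l: "l \<in> S" and kl: "k \<noteq> l"
  shows "det_on S (row_update M k (\<lambda>j. M k j + t * M l j)) = det_on S M"
proof -
  have "row_update M k (M k) = M" unfolding row_update_def by auto
  moreover have "det_on S (row_update M k (M l)) = 0"
    by (rule det_on_eq_rows[OF fin k l kl]) (simp add: row_update_def kl[symmetric])
  ultimately show ?thesis using det_on_row_linear[OF fin k, of M "M k" t "M l"] by simp
qed

lemma det_on_rows_add:
  assumes fin: "finite S" and k: "k \<in> S" and T: "T \<subseteq> S - {k}"
  shows "det_on S (row_update M k (\<lambda>j. M k j + (\<Sum>w\<in>T. M w j))) = det_on S M"
proof -
  have "finite T" using T fin finite_subset by blast
  then show ?thesis using T
  proof (induction T rule: finite_induct)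
    case empty
    have "row_update M k (\<lambda>j. M k j + (\<Sum>w\<in>{}. M w j)) = M" unfolding row_update_def by auto
    then show ?case by simp
  next
    case (insert w T)
    let ?M = "row_update M k (\<lambda>j. M k j + (\<Sum>w\<in>T. M w j))"
    have w: "w \<in> S" "w \<noteq> k" using insert.prems by auto
    have "row_update M k (\<lambda>j. M k j + (\<Sum>w\<in>insert w T. M w j)) = row_update ?M k (\<lambda>j. ?M k j + 1 * ?M w j)"
      using insert.hyps w unfolding row_update_def by (auto intro!: ext)
    then show ?case using det_on_row_add[OF fin k w(1) w(2)[symmetric], of ?M 1] insert by auto
  qed
qed

lemma det_on_schur:
  assumes fin: "finite S" and x: "x \<in> S" and nz: "M x x \<noteq> 0"
  shows "det_on S M = M x x * det_on (S - {x}) (\<lambda>y z. M y z - M y x * M x z / M x x)"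
proof -
  define N where "N T = (\<lambda>i. if i \<in> T then (\<lambda>j. M i j - M i x / M x x * M x j) else M i)" for T
  have "det_on S (N T) = det_on S M" if T: "T \<subseteq> S - {x}" for T
  proof -
    have "finite T" using T fin finite_subset by blast
    then show ?thesis using T
    proof (induction T rule: finite_induct)
      case empty
      have "N {} = M" unfolding N_def by auto
      then show ?case by simp
    next
      case (insert y T)
      have y: "y \<in> S" "y \<noteq> x" using insert.prems by auto
      have "N (insert y T) = row_update (N T) y (\<lambda>j. N T y j + (- M y x / M x x) * N T x j)"
        using insert.hyps insert.prems unfolding N_def row_update_def by (auto intro!: ext)
      then have "det_on S (N (insert y T)) = det_on S (N T)"
        by (simp only: det_on_row_add[OF fin y(1) x y(2)])
      then show ?case using insert by simp
    qed
  qed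
  then have "det_on S M = det_on S (N (S - {x}))" by simp
  also have "\<dots> = N (S - {x}) x x * det_on (S - {x}) (N (S - {x}))"
    by (rule det_on_col_diag[OF fin x]) (use nz in \<open>auto simp: N_def\<close>)
  also have "det_on (S - {x}) (N (S - {x})) = det_on (S - {x}) (\<lambda>y z. M y z - M y x * M x z / M x x)"
    by (rule det_on_cong) (auto simp: N_def)
  finally show ?thesis by (simp add: N_def)
qed

section \<open>Conductance networks and the Dirichlet principle\<close>

definition network :: "'v set \<Rightarrow> ('v \<Rightarrow> 'v \<Rightarrow> real) \<Rightarrow> bool" where
  "network V c \<longleftrightarrow> finite V \<and> (\<forall>y z. c y z = c z y) \<and> (\<forall>y z. 0 \<le> c y z)"

definition wdegree :: "'v set \<Rightarrow> ('v \<Rightarrow> 'v \<Rightarrow> real) \<Rightarrow> 'v \<Rightarrow> real" where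
  "wdegree V c x = (\<Sum>w\<in>V - {x}. c x w)"

definition laplacian :: "'v set \<Rightarrow> ('v \<Rightarrow> 'v \<Rightarrow> real) \<Rightarrow> 'v \<Rightarrow> 'v \<Rightarrow> real" where
  "laplacian V c y z = (if y = z then wdegree V c y else - c y z)"

definition energy_form :: "'v set \<Rightarrow> ('v \<Rightarrow> 'v \<Rightarrow> real) \<Rightarrow> ('v \<Rightarrow> real) \<Rightarrow> real" where
  "energy_form V c f = (\<Sum>y\<in>V. \<Sum>z\<in>V. c y z * (f y - f z)\<^sup>2) / 2"

definition linked :: "'v set \<Rightarrow> ('v \<Rightarrow> 'v \<Rightarrow> real) \<Rightarrow> 'v \<Rightarrow> 'v \<Rightarrow> bool" where
  "linked V c u v \<longleftrightarrow> u \<in> V \<and> v \<in> V \<and> u \<noteq> v \<and> 0 < c u v"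

definition connected_network :: "'v set \<Rightarrow> ('v \<Rightarrow> 'v \<Rightarrow> real) \<Rightarrow> bool" where
  "connected_network V c \<longleftrightarrow> (\<forall>x\<in>V. \<forall>y\<in>V. (linked V c)\<^sup>*\<^sup>* x y)"

text \<open>The star-mesh transform eliminating the vertex \<open>x\<close>: its Laplacian on \<open>V - {x}\<close> is the
  Schur complement of the diagonal entry at \<open>x\<close> (\<open>laplacian_star_mesh\<close>).\<close>

definition star_mesh :: "'v set \<Rightarrow> ('v \<Rightarrow> 'v \<Rightarrow> real) \<Rightarrow> 'v \<Rightarrow> 'v \<Rightarrow> 'v \<Rightarrow> real" where
  "star_mesh V c x = (\<lambda>y z. c y z + c x y * c x z / wdegree V c x)"

lemma linked_sym: "network V c \<Longrightarrow> linked V c u v \<Longrightarrow> linked V c v u"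
  unfolding linked_def network_def by metis

lemma linked_rtranclp_sym: "network V c \<Longrightarrow> (linked V c)\<^sup>*\<^sup>* u v \<Longrightarrow> (linked V c)\<^sup>*\<^sup>* v u"
  using sympD[OF symp_rtranclp] linked_sym by (metis sympI)

lemma wdegree_pos:
  assumes g: "network V c" and cc: "connected_network V c" and x: "x \<in> V" and y: "y \<in> V" "y \<noteq> x"
  shows "0 < wdegree V c x"
proof -
  obtain w where "linked V c x w"
    using cc x y unfolding connected_network_def by (metis converse_rtranclpE)
  then show ?thesis
    using g sum_pos2[of "V - {x}" w "c x"] unfolding wdegree_def linked_def network_def by auto
qed

lemma network_star_mesh: "network V c \<Longrightarrow> 0 < wdegree V c x \<Longrightarrow> network (V - {x}) (star_mesh V c x)"
  unfolding network_def star_mesh_def by (auto simp: mult.commute)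

lemma laplacian_star_mesh:
  assumes g: "network V c" and x: "x \<in> V" and D: "0 < wdegree V c x"
    and y: "y \<in> V - {x}" and z: "z \<in> V - {x}"
  shows "laplacian (V - {x}) (star_mesh V c x) y z
       = laplacian V c y z - laplacian V c y x * laplacian V c x z / laplacian V c x x"
proof (cases "y = z")
  case False
  then show ?thesis
    using g y z unfolding laplacian_def star_mesh_def network_def by auto
next
  case True
  have fin: "finite V" and sym: "c y x = c x y" using g unfolding network_def by auto
  have "V - {y} = insert x (V - {x} - {y})" "V - {x} = insert y (V - {x} - {y})"
    using x y by auto
  then have "wdegree V c y = c y x + (\<Sum>w\<in>V - {x} - {y}. c y w)"
    and "wdegree V c x = c x y + (\<Sum>w\<in>V - {x} - {y}. c x w)"
    unfolding wdegree_def using fin by (metis finite_Diff sum.insert Diff_iff insertI1)+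
  moreover have "wdegree (V - {x}) (star_mesh V c x) y
      = (\<Sum>w\<in>V - {x} - {y}. c y w) + c x y * (\<Sum>w\<in>V - {x} - {y}. c x w) / wdegree V c x"
    unfolding wdegree_def star_mesh_def
    by (simp add: sum.distrib sum_divide_distrib[symmetric] sum_distrib_left[symmetric])
  moreover have "y \<noteq> x" "x \<noteq> y" using y by auto
  ultimately show ?thesis
    using True D sym unfolding laplacian_def by (simp add: field_simps)
qed

lemma reduced_det_star_mesh:
  assumes g: "network V c" and S: "S \<subseteq> V" "x \<in> S" and D: "0 < wdegree V c x"
  shows "det_on S (laplacian V c)
       = wdegree V c x * det_on (S - {x}) (laplacian (V - {x}) (star_mesh V c x))"
proof -
  have fin: "finite S" using g S finite_subset unfolding network_def by blast
  have xx: "laplacian V c x x = wdegree V c x" unfolding laplacian_def by simp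
  let ?M = "laplacian V c"
  have "det_on S ?M = ?M x x * det_on (S - {x}) (\<lambda>y z. ?M y z - ?M y x * ?M x z / ?M x x)"
    using det_on_schur[OF fin S(2)] D xx by simp
  also have "det_on (S - {x}) (\<lambda>y z. ?M y z - ?M y x * ?M x z / ?M x x)
      = det_on (S - {x}) (laplacian (V - {x}) (star_mesh V c x))"
  proof (rule det_on_cong)
    fix i j assume "i \<in> S - {x}" "j \<in> S - {x}"
    then show "laplacian V c i j - laplacian V c i x * laplacian V c x j / laplacian V c x x
        = laplacian (V - {x}) (star_mesh V c x) i j"
      using laplacian_star_mesh[OF g _ D, of i j] S by (simp add: subset_iff)
  qed
  finally show ?thesis unfolding xx .
qed

lemma sum_sum_weighted_sq_diff:
  fixes a f :: "'v \<Rightarrow> real"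
  shows "(\<Sum>y\<in>A. \<Sum>z\<in>A. a y * a z * (f y - f z)\<^sup>2)
       = 2 * (\<Sum>y\<in>A. a y) * (\<Sum>y\<in>A. a y * (f y)\<^sup>2) - 2 * (\<Sum>y\<in>A. a y * f y)\<^sup>2"
proof -
  have e: "a y * a z * (f y - f z)\<^sup>2
      = a z * (a y * (f y)\<^sup>2) + a y * (a z * (f z)\<^sup>2) - 2 * ((a y * f y) * (a z * f z))" for y z
    by (simp add: power2_eq_square algebra_simps)
  have "(\<Sum>y\<in>A. \<Sum>z\<in>A. a z * (a y * (f y)\<^sup>2)) = (\<Sum>y\<in>A. a y) * (\<Sum>y\<in>A. a y * (f y)\<^sup>2)"
    unfolding sum_product by (rule sum.swap)
  moreover have "(\<Sum>y\<in>A. \<Sum>z\<in>A. a y * (a z * (f z)\<^sup>2)) = (\<Sum>y\<in>A. a y) * (\<Sum>y\<in>A. a y * (f y)\<^sup>2)"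
    by (simp add: sum_product)
  moreover have "(\<Sum>y\<in>A. \<Sum>z\<in>A. 2 * ((a y * f y) * (a z * f z))) = 2 * (\<Sum>y\<in>A. a y * f y)\<^sup>2"
    by (simp only: power2_eq_square sum_product flip: sum_distrib_left)
  ultimately show ?thesis
    unfolding e sum_subtractf sum.distrib by simp
qed

lemma sum_sum_remove_sym:
  fixes g :: "'v \<Rightarrow> 'v \<Rightarrow> 'a::comm_semiring_1"
  assumes fin: "finite V" and x: "x \<in> V" and sym: "\<And>y z. g y z = g z y"
  shows "(\<Sum>y\<in>V. \<Sum>z\<in>V. g y z)
       = g x x + 2 * (\<Sum>z\<in>V - {x}. g x z) + (\<Sum>y\<in>V - {x}. \<Sum>z\<in>V - {x}. g y z)"
proof -
  have "(\<Sum>y\<in>V. \<Sum>z\<in>V. g y z) = (\<Sum>z\<in>V. g x z) + (\<Sum>y\<in>V - {x}. \<Sum>z\<in>V. g y z)"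
    and "(\<Sum>z\<in>V. g x z) = g x x + (\<Sum>z\<in>V - {x}. g x z)"
    and "\<And>y. (\<Sum>z\<in>V. g y z) = g y x + (\<Sum>z\<in>V - {x}. g y z)"
    using sum.remove[OF fin x] by blast+
  moreover have "(\<Sum>y\<in>V - {x}. g y x) = (\<Sum>z\<in>V - {x}. g x z)"
    by (rule sum.cong[OF refl]) (rule sym)
  ultimately show ?thesis
    by (simp add: sum.distrib mult_2 ac_simps)
qed

lemma energy_form_star_mesh:
  assumes g: "network V c" and x: "x \<in> V" and D: "0 < wdegree V c x"
  shows "energy_form V c f = energy_form (V - {x}) (star_mesh V c x) f
     + wdegree V c x * (f x - (\<Sum>w\<in>V - {x}. c x w * f w) / wdegree V c x)\<^sup>2"
proof -
  have fin: "finite V" and sym: "\<And>y z. c y z = c z y" using g unfolding network_def by auto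
  let ?V = "V - {x}"
  define S1 where "S1 = (\<Sum>z\<in>?V. c x z * f z)"
  define S2 where "S2 = (\<Sum>z\<in>?V. c x z * (f z)\<^sup>2)"
  define G where "G = (\<Sum>y\<in>?V. \<Sum>z\<in>?V. c y z * (f y - f z)\<^sup>2)"
  have "(\<Sum>z\<in>?V. c x z * (f x - f z)\<^sup>2) = wdegree V c x * (f x)\<^sup>2 - 2 * f x * S1 + S2"
    unfolding wdegree_def S1_def S2_def
    by (simp add: power2_eq_square algebra_simps sum.distrib sum_subtractf sum_distrib_left sum_distrib_right)
  moreover have "c y z * (f y - f z)\<^sup>2 = c z y * (f z - f y)\<^sup>2" for y z
    using sym by (metis power2_commute)
  ultimately have E: "2 * energy_form V c f = 2 * (wdegree V c x * (f x)\<^sup>2 - 2 * f x * S1 + S2) + G"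
    using sum_sum_remove_sym[OF fin x, of "\<lambda>y z. c y z * (f y - f z)\<^sup>2"]
    unfolding energy_form_def G_def by simp
  have "2 * energy_form ?V (star_mesh V c x) f
      = G + (\<Sum>y\<in>?V. \<Sum>z\<in>?V. c x y * c x z * (f y - f z)\<^sup>2) / wdegree V c x"
    unfolding energy_form_def star_mesh_def G_def
    by (simp add: algebra_simps sum.distrib sum_divide_distrib)
  also have "(\<Sum>y\<in>?V. \<Sum>z\<in>?V. c x y * c x z * (f y - f z)\<^sup>2) = 2 * wdegree V c x * S2 - 2 * S1\<^sup>2"
    using sum_sum_weighted_sq_diff[of "c x" f ?V] unfolding wdegree_def S1_def S2_def .
  finally have E0: "energy_form ?V (star_mesh V c x) f = G / 2 + S2 - S1\<^sup>2 / wdegree V c x"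
    using D by (simp add: field_simps)
  have "energy_form V c f = G / 2 + S2 + wdegree V c x * (f x)\<^sup>2 - 2 * S1 * f x"
    using E by (simp add: algebra_simps)
  moreover have "wdegree V c x * (f x - S1 / wdegree V c x)\<^sup>2
      = wdegree V c x * (f x)\<^sup>2 - 2 * S1 * f x + S1\<^sup>2 / wdegree V c x"
    using D by (simp add: field_simps power2_eq_square)
  ultimately show ?thesis
    unfolding E0 S1_def[symmetric] by simp
qed

lemma energy_form_cong: "(\<And>v. v \<in> V \<Longrightarrow> f v = g v) \<Longrightarrow> energy_form V c f = energy_form V c g"
  unfolding energy_form_def by (simp cong: sum.cong)

lemma energy_form_one_minus: "energy_form V c (\<lambda>v. 1 - f v) = energy_form V c f"
  unfolding energy_form_def by (simp add: power2_commute)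

lemma energy_form_star_mesh_le:
  assumes "network V c" "x \<in> V" "0 < wdegree V c x"
  shows "energy_form (V - {x}) (star_mesh V c x) f \<le> energy_form V c f"
  using energy_form_star_mesh[OF assms, of f] assms(3) by simp

lemma energy_form_harmonic_extension:
  assumes "network V c" "x \<in> V" "0 < wdegree V c x"
  shows "energy_form V c (f(x := (\<Sum>w\<in>V - {x}. c x w * f w) / wdegree V c x))
       = energy_form (V - {x}) (star_mesh V c x) f"
proof -
  let ?h = "f(x := (\<Sum>w\<in>V - {x}. c x w * f w) / wdegree V c x)"
  have "(\<Sum>w\<in>V - {x}. c x w * ?h w) = (\<Sum>w\<in>V - {x}. c x w * f w)"
    by (rule sum.cong) auto
  moreover have "energy_form (V - {x}) (star_mesh V c x) ?h = energy_form (V - {x}) (star_mesh V c x) f"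
    by (rule energy_form_cong) auto
  ultimately show ?thesis using energy_form_star_mesh[OF assms, of ?h] by simp
qed

lemma linked_star_mesh:
  assumes "network V c" "0 < wdegree V c x" "u \<in> V - {x}" "w \<in> V - {x}" "u \<noteq> w"
    and "0 < c u w \<or> 0 < c x u \<and> 0 < c x w"
  shows "linked (V - {x}) (star_mesh V c x) u w"
proof -
  have "0 \<le> c u w" "0 \<le> c x u * c x w / wdegree V c x"
    using assms(1,2) unfolding network_def by auto
  then show ?thesis
    using assms(2-6) unfolding linked_def star_mesh_def by (auto simp: add_pos_nonneg add_nonneg_pos)
qed

lemma connected_star_mesh:
  assumes g: "network V c" and cc: "connected_network V c" and x: "x \<in> V" and D: "0 < wdegree V c x"
  shows "connected_network (V - {x}) (star_mesh V c x)"
proof -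
  have sym: "\<And>y z. c y z = c z y" using g unfolding network_def by auto
  let ?R = "linked (V - {x}) (star_mesh V c x)"
  text \<open>Along a path in \<open>V\<close>, a visit of \<open>x\<close> is bypassed by the new links between the
    neighbours of \<open>x\<close>.\<close>
  have main: "(z \<noteq> x \<longrightarrow> ?R\<^sup>*\<^sup>* y z) \<and> (z = x \<longrightarrow> (\<forall>u\<in>V - {x}. 0 < c x u \<longrightarrow> ?R\<^sup>*\<^sup>* y u))"
    if "(linked V c)\<^sup>*\<^sup>* y z" "y \<in> V - {x}" for y z
    using that(1)
  proof (induction rule: rtranclp_induct)
    case base
    then show ?case using that(2) by auto
  next
    case (step z z')
    have zz: "z \<in> V" "z' \<in> V" "z \<noteq> z'" "0 < c z z'" using step.hyps(2) unfolding linked_def by auto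
    show ?case
    proof (cases "z = x")
      case True
      then show ?thesis using step.IH zz by auto
    next
      case False
      then have Rz: "?R\<^sup>*\<^sup>* y z" using step.IH by blast
      have "?R\<^sup>*\<^sup>* y u" if "z' = x" "u \<in> V - {x}" "0 < c x u" for u
      proof (cases "u = z")
        case False
        then have "?R z u"
          using linked_star_mesh[OF g D, of z u] zz that sym[of z x] \<open>z \<noteq> x\<close> by auto
        with Rz show ?thesis by (rule rtranclp.rtrancl_into_rtrancl)
      qed (use Rz in simp)
      moreover have "?R z z'" if "z' \<noteq> x"
        using linked_star_mesh[OF g D, of z z'] zz that False by auto
      ultimately show ?thesis using Rz by (metis rtranclp.rtrancl_into_rtrancl)
    qed
  qed
  show ?thesis
    using main cc unfolding connected_network_def by auto
qed

definition det_ratio_is_min_energy :: "'v set \<Rightarrow> ('v \<Rightarrow> 'v \<Rightarrow> real) \<Rightarrow> 'v \<Rightarrow> 'v \<Rightarrow> bool" where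
  "det_ratio_is_min_energy V c p q \<longleftrightarrow>
     0 < det_on (V - {q}) (laplacian V c) \<and> 0 < det_on (V - {p, q}) (laplacian V c) \<and>
     (\<forall>f. f p = 1 \<longrightarrow> f q = 0 \<longrightarrow>
        det_on (V - {q}) (laplacian V c) / det_on (V - {p, q}) (laplacian V c) \<le> energy_form V c f) \<and>
     (\<exists>f. f p = 1 \<and> f q = 0 \<and>
        energy_form V c f = det_on (V - {q}) (laplacian V c) / det_on (V - {p, q}) (laplacian V c))"

lemma det_ratio_is_min_energy_pair:
  assumes g: "network V c" and cc: "connected_network V c" and V: "V = {p, q}" and pq: "p \<noteq> q"
  shows "det_ratio_is_min_energy V c p q"
proof -
  have "c q p = c p q" using g unfolding network_def by auto
  then have "energy_form V c f = c p q" if "f p = 1" "f q = 0" for f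
    unfolding energy_form_def using V pq that by simp
  moreover have "wdegree V c p = c p q" unfolding wdegree_def using V pq by simp
  moreover have "0 < wdegree V c p" using wdegree_pos[OF g cc, of p q] V pq by simp
  moreover have "V - {q} = {p}" and empty: "V - {p, q} = {}" using V pq by auto
  ultimately show ?thesis
    unfolding det_ratio_is_min_energy_def empty
    by (auto simp: laplacian_def intro!: exI[of _ "\<lambda>v. if v = p then 1 else 0"])
qed

text \<open>Eliminating a vertex \<open>x \<notin> {p, q}\<close> scales both reduced determinants by the degree of \<open>x\<close>
  and keeps the minimal energy, the optimal potential at \<open>x\<close> being the weighted mean of its
  neighbours.\<close>

lemma det_ratio_is_min_energy_star_mesh:
  assumes g: "network V c" and x: "x \<in> V" "x \<noteq> p" "x \<noteq> q" and D: "0 < wdegree V c x"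
    and min: "det_ratio_is_min_energy (V - {x}) (star_mesh V c x) p q"
  shows "det_ratio_is_min_energy V c p q"
proof -
  let ?V = "V - {x}" and ?c = "star_mesh V c x"
  have "V - {q} - {x} = ?V - {q}" "V - {p, q} - {x} = ?V - {p, q}" by auto
  then have d1: "det_on (V - {q}) (laplacian V c) = wdegree V c x * det_on (?V - {q}) (laplacian ?V ?c)"
    and d2: "det_on (V - {p, q}) (laplacian V c) = wdegree V c x * det_on (?V - {p, q}) (laplacian ?V ?c)"
    using reduced_det_star_mesh[OF g _ _ D, of "V - {q}"] reduced_det_star_mesh[OF g _ _ D, of "V - {p, q}"] x
    by auto
  have ratio: "det_on (V - {q}) (laplacian V c) / det_on (V - {p, q}) (laplacian V c)
      = det_on (?V - {q}) (laplacian ?V ?c) / det_on (?V - {p, q}) (laplacian ?V ?c)"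
    unfolding d1 d2 using D by simp
  obtain f where f: "f p = 1" "f q = 0"
    "energy_form ?V ?c f = det_on (?V - {q}) (laplacian ?V ?c) / det_on (?V - {p, q}) (laplacian ?V ?c)"
    using min unfolding det_ratio_is_min_energy_def by blast
  let ?h = "f(x := (\<Sum>w\<in>V - {x}. c x w * f w) / wdegree V c x)"
  have "?h p = 1" "?h q = 0" "energy_form V c ?h = energy_form ?V ?c f"
    using f x energy_form_harmonic_extension[OF g x(1) D] by auto
  moreover have "0 < det_on (V - {q}) (laplacian V c)" "0 < det_on (V - {p, q}) (laplacian V c)"
    using min D unfolding d1 d2 det_ratio_is_min_energy_def by simp_all
  moreover have "det_on (V - {q}) (laplacian V c) / det_on (V - {p, q}) (laplacian V c) \<le> energy_form V c f'"
    if "f' p = 1" "f' q = 0" for f'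
  proof -
    have "det_on (?V - {q}) (laplacian ?V ?c) / det_on (?V - {p, q}) (laplacian ?V ?c) \<le> energy_form ?V ?c f'"
      using min that unfolding det_ratio_is_min_energy_def by blast
    then show ?thesis
      unfolding ratio using energy_form_star_mesh_le[OF g x(1) D, of f'] by linarith
  qed
  ultimately show ?thesis
    unfolding det_ratio_is_min_energy_def ratio f(3)[symmetric] by blast
qed

lemma dirichlet_principle:
  assumes "network V c" "connected_network V c" "p \<in> V" "q \<in> V" "p \<noteq> q"
  shows "det_ratio_is_min_energy V c p q"
  using assms
proof (induction "card V" arbitrary: V c)
  case 0
  then show ?case unfolding network_def by auto
next
  case (Suc n)
  note g = Suc.prems(1) and cc = Suc.prems(2)
  show ?case
  proof (cases "V - {p, q} = {}")
    case True
    then show ?thesis using det_ratio_is_min_energy_pair[OF g cc] Suc.prems by blast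
  next
    case False
    then obtain x where x: "x \<in> V" "x \<noteq> p" "x \<noteq> q" by auto
    have D: "0 < wdegree V c x" using wdegree_pos[OF g cc x(1)] Suc.prems x by auto
    have "finite V" using g unfolding network_def by simp
    then show ?thesis
      using Suc network_star_mesh[OF g D] connected_star_mesh[OF g cc x(1) D] x
      by (intro det_ratio_is_min_energy_star_mesh[OF g x D]) auto
  qed
qed

lemma Inf_energy_form:
  assumes "network V c" "connected_network V c" "p \<in> V" "q \<in> V" "p \<noteq> q"
  shows "Inf {energy_form V c f | f. f p = 1 \<and> f q = 0}
       = det_on (V - {q}) (laplacian V c) / det_on (V - {p, q}) (laplacian V c)"
proof -
  note A = dirichlet_principle[OF assms, unfolded det_ratio_is_min_energy_def]
  show ?thesis
  proof (rule cInf_eq_minimum)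
    show "det_on (V - {q}) (laplacian V c) / det_on (V - {p, q}) (laplacian V c)
        \<in> {energy_form V c f | f. f p = 1 \<and> f q = 0}"
      using A by force
  qed (use A in auto)
qed

lemma reduced_det_indep_connected:
  assumes g: "network V c" and cc: "connected_network V c" and p: "p \<in> V" and q: "q \<in> V"
  shows "det_on (V - {p}) (laplacian V c) = det_on (V - {q}) (laplacian V c)"
proof (cases "p = q")
  case False
  text \<open>The potentials \<open>f\<close> and \<open>1 - f\<close> have the same energy, so the effective conductance is
    symmetric; the denominators agree.\<close>
  note A1 = dirichlet_principle[OF g cc p q False, unfolded det_ratio_is_min_energy_def]
    and A2 = dirichlet_principle[OF g cc q p False[symmetric], unfolded det_ratio_is_min_energy_def]
  have s: "V - {q, p} = V - {p, q}" by auto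
  let ?d = "det_on (V - {p, q}) (laplacian V c)"
  obtain f1 where f1: "f1 p = 1" "f1 q = 0" "energy_form V c f1 = det_on (V - {q}) (laplacian V c) / ?d"
    using A1 by blast
  obtain f2 where f2: "f2 q = 1" "f2 p = 0" "energy_form V c f2 = det_on (V - {p}) (laplacian V c) / ?d"
    using A2 unfolding s by blast
  have "det_on (V - {p}) (laplacian V c) / ?d \<le> energy_form V c (\<lambda>v. 1 - f1 v)"
    using A2 f1 unfolding s by auto
  moreover have "det_on (V - {q}) (laplacian V c) / ?d \<le> energy_form V c (\<lambda>v. 1 - f2 v)"
    using A1 f2 by auto
  moreover have "0 < ?d" using A1 by blast
  ultimately show ?thesis
    using f1(3) f2(3) unfolding energy_form_one_minus by (simp add: divide_le_cancel)
qed simp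

lemma det_on_rows_sum_zero:
  assumes fin: "finite S" and W: "W \<subseteq> S" "y \<in> W" and z: "\<And>j. j \<in> S \<Longrightarrow> (\<Sum>w\<in>W. M w j) = 0"
  shows "det_on S M = 0"
proof -
  have y: "y \<in> S" and finW: "finite W" using W fin finite_subset by auto
  have "W - {y} \<subseteq> S - {y}" using W by auto
  from det_on_rows_add[OF fin y this]
  have "det_on S M = det_on S (row_update M y (\<lambda>j. M y j + (\<Sum>w\<in>W - {y}. M w j)))" by simp
  also have "\<dots> = 0"
  proof (rule det_on_zero_row[OF fin y])
    fix j assume "j \<in> S"
    then show "row_update M y (\<lambda>j. M y j + (\<Sum>w\<in>W - {y}. M w j)) y j = 0"
      using z sum.remove[OF finW W(2), of "\<lambda>w. M w j"] unfolding row_update_def by simp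
  qed
  finally show ?thesis .
qed

lemma sum_laplacian_closed:
  assumes g: "network V c" and W: "W \<subseteq> V" and z: "z \<in> V"
    and closed: "\<And>w u. w \<in> W \<Longrightarrow> u \<in> V - W \<Longrightarrow> c w u = 0"
  shows "(\<Sum>w\<in>W. laplacian V c w z) = 0"
proof (cases "z \<in> W")
  case True
  have fin: "finite V" and sym: "\<And>y z. c y z = c z y" using g unfolding network_def by auto
  have finW: "finite W" using W fin finite_subset by blast
  have "V - {z} = (W - {z}) \<union> (V - W)" "(W - {z}) \<inter> (V - W) = {}" using W True by auto
  then have "wdegree V c z = (\<Sum>u\<in>W - {z}. c z u) + (\<Sum>u\<in>V - W. c z u)"
    unfolding wdegree_def using fin finW by (simp add: sum.union_disjoint)
  moreover have "(\<Sum>u\<in>V - W. c z u) = 0" using closed True by simp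
  moreover have "(\<Sum>w\<in>W. laplacian V c w z) = laplacian V c z z + (\<Sum>w\<in>W - {z}. laplacian V c w z)"
    using sum.remove[OF finW True] .
  moreover have "(\<Sum>w\<in>W - {z}. laplacian V c w z) = - (\<Sum>w\<in>W - {z}. c z w)"
    by (simp add: laplacian_def sum_negf sym)
  ultimately show ?thesis by (simp add: laplacian_def)
next
  case False
  then show ?thesis
    using closed z unfolding laplacian_def by (auto intro: sum.neutral)
qed

lemma reduced_det_disconnected:
  assumes g: "network V c" and q: "q \<in> V" and y: "y \<in> V" and nr: "\<not> (linked V c)\<^sup>*\<^sup>* q y"
  shows "det_on (V - {q}) (laplacian V c) = 0"
proof -
  have fin: "finite V" and nn: "\<And>y z. 0 \<le> c y z" using g unfolding network_def by auto
  define W where "W = {w\<in>V. \<not> (linked V c)\<^sup>*\<^sup>* q w}"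
  have closed: "c w u = 0" if "w \<in> W" "u \<in> V - W" for w u
  proof (rule ccontr)
    assume "c w u \<noteq> 0"
    then have "linked V c u w"
      using that nn[of w u] linked_sym[OF g, of w u] unfolding linked_def W_def by auto
    moreover have "(linked V c)\<^sup>*\<^sup>* q u" using that unfolding W_def by auto
    ultimately have "(linked V c)\<^sup>*\<^sup>* q w" by (rule rtranclp.rtrancl_into_rtrancl[rotated])
    then show False using that unfolding W_def by auto
  qed
  have WV: "W \<subseteq> V" unfolding W_def by auto
  show ?thesis
  proof (rule det_on_rows_sum_zero)
    show "W \<subseteq> V - {q}" "y \<in> W" using y nr unfolding W_def by auto
    show "(\<Sum>w\<in>W. laplacian V c w j) = 0" if "j \<in> V - {q}" for j
      by (rule sum_laplacian_closed[OF g WV _ closed]) (use that in auto)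
  qed (use fin in simp)
qed

lemma reduced_det_indep:
  assumes g: "network V c" and p: "p \<in> V" and q: "q \<in> V"
  shows "det_on (V - {p}) (laplacian V c) = det_on (V - {q}) (laplacian V c)"
proof (cases "connected_network V c")
  case True
  then show ?thesis using reduced_det_indep_connected[OF g True p q] by simp
next
  case False
  then obtain y z where yz: "y \<in> V" "z \<in> V" "\<not> (linked V c)\<^sup>*\<^sup>* y z"
    unfolding connected_network_def by blast
  have "\<exists>w\<in>V. \<not> (linked V c)\<^sup>*\<^sup>* r w" for r
    using yz linked_rtranclp_sym[OF g] by (meson rtranclp_trans)
  then show ?thesis
    using reduced_det_disconnected[OF g p] reduced_det_disconnected[OF g q] by metis
qed

section \<open>Kirchhoff's determinant of a multigraph\<close>

definition edge_conductance :: "'e set \<Rightarrow> ('e \<Rightarrow> 'v \<times> 'v) \<Rightarrow> ('e \<Rightarrow> real) \<Rightarrow> 'v \<Rightarrow> 'v \<Rightarrow> real" where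
  "edge_conductance E ends L y z = (\<Sum>e\<in>{e\<in>E. ends e = (y, z) \<or> ends e = (z, y)}. 1 / L e)"

definition weighted_graph :: "'v set \<Rightarrow> 'e set \<Rightarrow> ('e \<Rightarrow> 'v \<times> 'v) \<Rightarrow> ('e \<Rightarrow> real) \<Rightarrow> bool" where
  "weighted_graph V E ends L \<longleftrightarrow>
     finite V \<and> finite E \<and> (\<forall>e\<in>E. fst (ends e) \<in> V \<and> snd (ends e) \<in> V \<and> 0 < L e)"

text \<open>By the matrix-tree theorem, \<open>kirchhoff\<close> is the sum over spanning trees of the products of
  the edge conductances \<open>1 / L e\<close>; the choice of the deleted vertex is irrelevant
  (\<open>kirchhoff_eq_reduced_det\<close>).\<close>

definition kirchhoff :: "'v set \<Rightarrow> 'e set \<Rightarrow> ('e \<Rightarrow> 'v \<times> 'v) \<Rightarrow> ('e \<Rightarrow> real) \<Rightarrow> real" where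
  "kirchhoff V E ends L = det_on (V - {SOME q. q \<in> V}) (laplacian V (edge_conductance E ends L))"

lemma network_edge_conductance: "weighted_graph V E ends L \<Longrightarrow> network V (edge_conductance E ends L)"
  unfolding network_def weighted_graph_def edge_conductance_def
  by (auto intro!: sum_nonneg sum.cong simp: less_imp_le)

lemma kirchhoff_eq_reduced_det:
  "weighted_graph V E ends L \<Longrightarrow> q \<in> V \<Longrightarrow>
   kirchhoff V E ends L = det_on (V - {q}) (laplacian V (edge_conductance E ends L))"
  unfolding kirchhoff_def by (rule reduced_det_indep[OF network_edge_conductance]) (auto intro: someI)

lemma edge_conductance_Diff:
  assumes "finite E" "e \<in> E"
  shows "edge_conductance E ends L y z
       = edge_conductance (E - {e}) ends L y z + (if ends e = (y, z) \<or> ends e = (z, y) then 1 / L e else 0)"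
proof -
  let ?P = "\<lambda>d. ends d = (y, z) \<or> ends d = (z, y)"
  have "{d\<in>E. ?P d} = (if ?P e then insert e {d\<in>E - {e}. ?P d} else {d\<in>E - {e}. ?P d})"
    using assms(2) by auto
  then show ?thesis unfolding edge_conductance_def using assms(1) by simp
qed

lemma wdegree_edge_conductance:
  assumes w: "weighted_graph V E ends L" and y: "y \<in> V"
  shows "wdegree V (edge_conductance E ends L) y =
     (\<Sum>d\<in>{d\<in>E. (fst (ends d) = y \<and> snd (ends d) \<noteq> y) \<or> (snd (ends d) = y \<and> fst (ends d) \<noteq> y)}. 1 / L d)"
proof -
  have fin: "finite V" "finite E" using w unfolding weighted_graph_def by auto
  have "wdegree V (edge_conductance E ends L) y
      = (\<Sum>w\<in>V - {y}. \<Sum>d\<in>E. if ends d = (y, w) \<or> ends d = (w, y) then 1 / L d else 0)"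
    unfolding wdegree_def edge_conductance_def by (intro sum.cong refl sum.inter_filter fin)
  also have "\<dots> = (\<Sum>d\<in>E. \<Sum>w\<in>V - {y}. if ends d = (y, w) \<or> ends d = (w, y) then 1 / L d else 0)"
    by (rule sum.swap)
  also have "\<dots> = (\<Sum>d\<in>E. if (fst (ends d) = y \<and> snd (ends d) \<noteq> y) \<or> (snd (ends d) = y \<and> fst (ends d) \<noteq> y)
      then 1 / L d else 0)"
  proof (rule sum.cong[OF refl])
    fix d assume d: "d \<in> E"
    obtain a b where ab: "ends d = (a, b)" by fastforce
    have "a \<in> V" "b \<in> V" using w d ab unfolding weighted_graph_def by force+
    text \<open>An edge incident to \<open>y\<close> (and not a loop) contributes to exactly one term, at its other end.\<close>
    then have "(\<Sum>w\<in>V - {y}. if (a, b) = (y, w) \<or> (a, b) = (w, y) then 1 / L d else 0)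
        = (\<Sum>w\<in>V - {y}. if w = (if a = y then b else a) \<and> (a = y \<or> b = y) then 1 / L d else 0)"
      by (intro sum.cong refl) auto
    also have "\<dots> = (if (a = y \<and> b \<noteq> y) \<or> (b = y \<and> a \<noteq> y) then 1 / L d else 0)"
      using \<open>a \<in> V\<close> \<open>b \<in> V\<close> fin(1) by (auto simp: sum.delta)
    finally show "(\<Sum>w\<in>V - {y}. if ends d = (y, w) \<or> ends d = (w, y) then 1 / L d else 0)
        = (if (fst (ends d) = y \<and> snd (ends d) \<noteq> y) \<or> (snd (ends d) = y \<and> fst (ends d) \<noteq> y)
           then 1 / L d else 0)"
      unfolding ab by simp
  qed
  also have "\<dots> = (\<Sum>d\<in>{d\<in>E. (fst (ends d) = y \<and> snd (ends d) \<noteq> y)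
      \<or> (snd (ends d) = y \<and> fst (ends d) \<noteq> y)}. 1 / L d)"
    by (rule sum.inter_filter[symmetric]) (use fin in auto)
  finally show ?thesis .
qed

lemma contract_ends_apply:
  "contract_ends ends e d = (contract_vertex ends e (fst (ends d)), contract_vertex ends e (snd (ends d)))"
  unfolding contract_ends_def by (simp add: map_prod_def split_beta)

lemma weighted_graph_subset: "weighted_graph V E ends L \<Longrightarrow> F \<subseteq> E \<Longrightarrow> weighted_graph V F ends L"
  unfolding weighted_graph_def by (auto intro: finite_subset)

lemma weighted_graph_contract:
  assumes "weighted_graph V E ends L" "e \<in> E" "fst (ends e) \<noteq> snd (ends e)"
  shows "weighted_graph (V - {snd (ends e)}) (E - {e}) (contract_ends ends e) L"
  using assms unfolding weighted_graph_def contract_ends_apply contract_vertex_def by auto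

lemma laplacian_contract:
  assumes w: "weighted_graph V E ends L" and e: "e \<in> E" and nl: "fst (ends e) \<noteq> snd (ends e)"
    and y: "y \<in> V - {fst (ends e), snd (ends e)}" and z: "z \<in> V - {fst (ends e), snd (ends e)}"
  shows "laplacian (V - {snd (ends e)}) (edge_conductance (E - {e}) (contract_ends ends e) L) y z
       = laplacian V (edge_conductance E ends L) y z"
proof -
  let ?n = "contract_ends ends e"
  have cv: "contract_vertex ends e u = v \<longleftrightarrow> u = v" if "v \<in> {y, z}" for u v
    using that y z unfolding contract_vertex_def by auto
  show ?thesis
  proof (cases "y = z")
    case False
    have "{d\<in>E - {e}. ?n d = (y, z) \<or> ?n d = (z, y)} = {d\<in>E. ends d = (y, z) \<or> ends d = (z, y)}"
      using y cv by (auto simp: contract_ends_apply prod_eq_iff)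
    then show ?thesis using False unfolding laplacian_def edge_conductance_def by simp
  next
    case True
    have "{d\<in>E - {e}. (fst (?n d) = y \<and> snd (?n d) \<noteq> y) \<or> (snd (?n d) = y \<and> fst (?n d) \<noteq> y)}
        = {d\<in>E. (fst (ends d) = y \<and> snd (ends d) \<noteq> y) \<or> (snd (ends d) = y \<and> fst (ends d) \<noteq> y)}"
      using y cv by (auto simp: contract_ends_apply)
    then show ?thesis
      using True y wdegree_edge_conductance[OF weighted_graph_contract[OF w e nl]]
        wdegree_edge_conductance[OF w] unfolding laplacian_def by simp
  qed
qed

lemma laplacian_edge_conductance_Diff:
  assumes w: "weighted_graph V E ends L" and e: "e \<in> E" and ab: "ends e = (a, b)" "a \<noteq> b"
    and y: "y \<in> V - {b}" and z: "z \<noteq> b"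
  shows "laplacian V (edge_conductance E ends L) y z
       = laplacian V (edge_conductance (E - {e}) ends L) y z + (if y = a \<and> z = a then 1 / L e else 0)"
proof -
  have fin: "finite V" "finite E" and bV: "b \<in> V"
    using w e ab unfolding weighted_graph_def by (auto dest: bspec[of E _ e])
  note Diff = edge_conductance_Diff[OF fin(2) e, of ends L]
  show ?thesis
  proof (cases "y = z")
    case False
    then show ?thesis using y z unfolding laplacian_def Diff ab by auto
  next
    case True
    have "(\<Sum>w\<in>V - {y}. if (a, b) = (y, w) \<or> (a, b) = (w, y) then 1 / L e else 0)
        = (\<Sum>w\<in>V - {y}. if y = a \<and> w = b then 1 / L e else 0)"
      using y by (intro sum.cong) auto
    also have "\<dots> = (if y = a then 1 / L e else 0)"
      using fin(1) bV ab(2) by (auto simp: sum.delta)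
    finally show ?thesis
      using True unfolding laplacian_def wdegree_def Diff ab by (simp add: sum.distrib)
  qed
qed

lemma laplacian_Diff_loop:
  assumes "finite E" "e \<in> E" "fst (ends e) = snd (ends e)"
  shows "laplacian V (edge_conductance E ends L) y z = laplacian V (edge_conductance (E - {e}) ends L) y z"
proof -
  have eq: "edge_conductance E ends L u w = edge_conductance (E - {e}) ends L u w" if "u \<noteq> w" for u w
    using edge_conductance_Diff[OF assms(1,2), of ends L u w] assms(3) that by (cases "ends e") auto
  have "wdegree V (edge_conductance E ends L) = wdegree V (edge_conductance (E - {e}) ends L)"
    unfolding wdegree_def using eq by (intro ext sum.cong) auto
  then show ?thesis unfolding laplacian_def using eq by simp
qed

lemma kirchhoff_Diff_loop:
  assumes w: "weighted_graph V E ends L" and e: "e \<in> E" and "fst (ends e) = snd (ends e)" and "V \<noteq> {}"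
  shows "kirchhoff V E ends L = kirchhoff V (E - {e}) ends L"
proof -
  obtain q where q: "q \<in> V" using assms(4) by auto
  have fin: "finite E" using w unfolding weighted_graph_def by simp
  have w0: "weighted_graph V (E - {e}) ends L" using weighted_graph_subset[OF w] by blast
  show ?thesis
    unfolding kirchhoff_eq_reduced_det[OF w q] kirchhoff_eq_reduced_det[OF w0 q]
    using laplacian_Diff_loop[of E e ends, OF fin e assms(3)] by (intro det_on_cong) auto
qed

lemma kirchhoff_contract_eq_minor:
  assumes w: "weighted_graph V E ends L" and e: "e \<in> E" and nl: "fst (ends e) \<noteq> snd (ends e)"
  shows "kirchhoff (V - {snd (ends e)}) (E - {e}) (contract_ends ends e) L
       = det_on (V - {fst (ends e), snd (ends e)}) (laplacian V (edge_conductance E ends L))"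
proof -
  have a: "fst (ends e) \<in> V - {snd (ends e)}" using w e nl unfolding weighted_graph_def by auto
  have s: "V - {snd (ends e)} - {fst (ends e)} = V - {fst (ends e), snd (ends e)}" by auto
  show ?thesis
    unfolding kirchhoff_eq_reduced_det[OF weighted_graph_contract[OF w e nl] a] s
    using laplacian_contract[OF w e nl] by (intro det_on_cong) auto
qed

lemma kirchhoff_contract_eq_minor_Diff:
  assumes w: "weighted_graph V E ends L" and e: "e \<in> E" and nl: "fst (ends e) \<noteq> snd (ends e)"
  shows "kirchhoff (V - {snd (ends e)}) (E - {e}) (contract_ends ends e) L
       = det_on (V - {fst (ends e), snd (ends e)}) (laplacian V (edge_conductance (E - {e}) ends L))"
  unfolding kirchhoff_contract_eq_minor[OF w e nl]
  using laplacian_edge_conductance_Diff[OF w e _ nl] by (intro det_on_cong) auto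

text \<open>Only the diagonal entry at \<open>p\<^sub>e\<close> of the Laplacian reduced at \<open>q\<^sub>e\<close> depends on \<open>e\<close>, and
  linearly so.\<close>

lemma kirchhoff_deletion_contraction:
  assumes w: "weighted_graph V E ends L" and e: "e \<in> E" and nl: "fst (ends e) \<noteq> snd (ends e)"
  shows "kirchhoff V E ends L
       = kirchhoff V (E - {e}) ends L
         + 1 / L e * kirchhoff (V - {snd (ends e)}) (E - {e}) (contract_ends ends e) L"
proof -
  define a b where "a = fst (ends e)" and "b = snd (ends e)"
  have fin: "finite V" and ab: "a \<in> V" "b \<in> V" "a \<noteq> b" "ends e = (a, b)"
    using w e nl unfolding weighted_graph_def a_def b_def by auto
  have w0: "weighted_graph V (E - {e}) ends L" using weighted_graph_subset[OF w] by blast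
  let ?M = "laplacian V (edge_conductance (E - {e}) ends L)" and ?S = "V - {b}"
  let ?\<delta> = "\<lambda>j. if j = a then 1 else 0"
  have aS: "a \<in> ?S" and finS: "finite ?S" using ab fin by auto
  have "det_on ?S (laplacian V (edge_conductance E ends L))
      = det_on ?S (row_update ?M a (\<lambda>j. ?M a j + 1 / L e * ?\<delta> j))"
    using laplacian_edge_conductance_Diff[OF w e ab(4,3)] by (intro det_on_cong) (auto simp: row_update_def)
  also have "\<dots> = det_on ?S (row_update ?M a (?M a)) + 1 / L e * det_on ?S (row_update ?M a ?\<delta>)"
    by (rule det_on_row_linear[OF finS aS])
  also have "row_update ?M a (?M a) = ?M"
    unfolding row_update_def by auto
  also have "det_on ?S (row_update ?M a ?\<delta>) = det_on (?S - {a}) ?M"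
    using det_on_row_diag[OF finS aS, of "row_update ?M a ?\<delta>"]
    by (simp add: row_update_def) (rule det_on_cong, auto)
  also have "?S - {a} = V - {a, b}" by auto
  finally show ?thesis
    using kirchhoff_contract_eq_minor_Diff[OF w e nl]
    unfolding kirchhoff_eq_reduced_det[OF w ab(2)] kirchhoff_eq_reduced_det[OF w0 ab(2)]
      a_def b_def by simp
qed

definition non_loops :: "'e set \<Rightarrow> ('e \<Rightarrow> 'v \<times> 'v) \<Rightarrow> 'e set" where
  "non_loops E ends = {e\<in>E. fst (ends e) \<noteq> snd (ends e)}"

definition kirchhoff_contract :: "'v set \<Rightarrow> 'e set \<Rightarrow> ('e \<Rightarrow> 'v \<times> 'v) \<Rightarrow> ('e \<Rightarrow> real) \<Rightarrow> 'e \<Rightarrow> real" where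
  "kirchhoff_contract V E ends L e = kirchhoff (V - {snd (ends e)}) (E - {e}) (contract_ends ends e) L"

lemma non_loops_contract_subset: "non_loops (E - {e}) (contract_ends ends e) \<subseteq> non_loops E ends"
  unfolding non_loops_def contract_ends_apply by auto

text \<open>Both sides say that \<open>e\<close> and \<open>f\<close> are distinct and not parallel.\<close>

lemma non_loops_contract_swap:
  assumes "e \<in> non_loops E ends" "f \<in> non_loops E ends"
  shows "f \<in> non_loops (E - {e}) (contract_ends ends e) \<longleftrightarrow> e \<in> non_loops (E - {f}) (contract_ends ends f)"
proof -
  obtain a b c d where "ends e = (a, b)" "ends f = (c, d)" by fastforce
  then show ?thesis
    using assms unfolding non_loops_def contract_ends_apply contract_vertex_def by auto
qed

lemma contract_ends_commute:
  assumes "{fst (ends e), snd (ends e)} \<inter> {fst (ends f), snd (ends f)} = {}"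
  shows "contract_ends (contract_ends ends e) f = contract_ends (contract_ends ends f) e"
    and "snd (contract_ends ends e f) = snd (ends f)"
  using assms unfolding contract_ends_apply contract_vertex_def by (auto intro!: ext)

lemma kirchhoff_contract_adjacent:
  assumes w: "weighted_graph V E ends L" and e: "e \<in> non_loops E ends"
    and f: "f \<in> non_loops (E - {e}) (contract_ends ends e)"
    and meet: "{fst (ends e), snd (ends e)} \<inter> {fst (ends f), snd (ends f)} \<noteq> {}"
  shows "kirchhoff_contract (V - {snd (ends e)}) (E - {e}) (contract_ends ends e) L f
       = det_on (V - {fst (ends e), snd (ends e), fst (ends f), snd (ends f)})
           (laplacian V (edge_conductance E ends L))"
proof -
  have eE: "e \<in> E" "fst (ends e) \<noteq> snd (ends e)" using e unfolding non_loops_def by auto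
  have fE: "f \<in> E - {e}" "fst (contract_ends ends e f) \<noteq> snd (contract_ends ends e f)"
    using f unfolding non_loops_def by auto
  obtain a b c d where ab: "ends e = (a, b)" and cd: "ends f = (c, d)" by fastforce
  have s: "V - {snd (ends e)} - {fst (contract_ends ends e f), snd (contract_ends ends e f)}
      = V - {fst (ends e), snd (ends e), fst (ends f), snd (ends f)}"
    using meet fE(2) unfolding contract_ends_apply contract_vertex_def ab cd by auto
  show ?thesis
    unfolding kirchhoff_contract_def kirchhoff_contract_eq_minor[OF weighted_graph_contract[OF w eE] fE] s
    using laplacian_contract[OF w eE] by (intro det_on_cong) auto
qed

lemma kirchhoff_contract_commute:
  assumes w: "weighted_graph V E ends L" and e: "e \<in> non_loops E ends"
    and f: "f \<in> non_loops (E - {e}) (contract_ends ends e)"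
  shows "kirchhoff_contract (V - {snd (ends e)}) (E - {e}) (contract_ends ends e) L f
       = kirchhoff_contract (V - {snd (ends f)}) (E - {f}) (contract_ends ends f) L e"
proof (cases "{fst (ends e), snd (ends e)} \<inter> {fst (ends f), snd (ends f)} = {}")
  case True
  have "V - {snd (ends e)} - {snd (ends f)} = V - {snd (ends f)} - {snd (ends e)}"
    "E - {e} - {f} = E - {f} - {e}" by auto
  moreover have "{fst (ends f), snd (ends f)} \<inter> {fst (ends e), snd (ends e)} = {}"
    using True by blast
  ultimately show ?thesis
    using contract_ends_commute[of ends e f, OF True] contract_ends_commute[of ends f e]
    unfolding kirchhoff_contract_def by simp
next
  case False
  have fE: "f \<in> non_loops E ends" using f non_loops_contract_subset[of E e ends] by blast
  then have ef: "e \<in> non_loops (E - {f}) (contract_ends ends f)"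
    using f non_loops_contract_swap[OF e] by blast
  have "{fst (ends f), snd (ends f)} \<inter> {fst (ends e), snd (ends e)} \<noteq> {}"
    using False by blast
  moreover have "V - {fst (ends e), snd (ends e), fst (ends f), snd (ends f)}
      = V - {fst (ends f), snd (ends f), fst (ends e), snd (ends e)}" by auto
  ultimately show ?thesis
    using kirchhoff_contract_adjacent[OF w e f False] kirchhoff_contract_adjacent[OF w fE ef] by simp
qed

lemma kirchhoff_contract_Diff:
  assumes w: "weighted_graph V E ends L" and e: "e \<in> E" and f: "f \<in> non_loops E ends" "f \<noteq> e"
  shows "kirchhoff_contract V E ends L f = kirchhoff_contract V (E - {e}) ends L f
     + (if e \<in> non_loops (E - {f}) (contract_ends ends f)
        then 1 / L e * kirchhoff_contract (V - {snd (ends f)}) (E - {f}) (contract_ends ends f) L e else 0)"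
proof -
  have fE: "f \<in> E" "fst (ends f) \<noteq> snd (ends f)" using f unfolding non_loops_def by auto
  have wf: "weighted_graph (V - {snd (ends f)}) (E - {f}) (contract_ends ends f) L"
    by (rule weighted_graph_contract[OF w fE])
  have ef: "e \<in> E - {f}" and s: "E - {f} - {e} = E - {e} - {f}" using e f by auto
  show ?thesis
  proof (cases "e \<in> non_loops (E - {f}) (contract_ends ends f)")
    case True
    then have "fst (contract_ends ends f e) \<noteq> snd (contract_ends ends f e)"
      unfolding non_loops_def by simp
    from kirchhoff_deletion_contraction[OF wf ef this] show ?thesis
      unfolding kirchhoff_contract_def s using True by simp
  next
    case False
    then have "fst (contract_ends ends f e) = snd (contract_ends ends f e)"
      using ef unfolding non_loops_def by simp
    moreover have "V - {snd (ends f)} \<noteq> {}" using w fE unfolding weighted_graph_def by force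
    ultimately show ?thesis
      using kirchhoff_Diff_loop[OF wf ef] False unfolding kirchhoff_contract_def s by simp
  qed
qed

lemma sum_kirchhoff_contract_Diff_loop:
  assumes w: "weighted_graph V E ends L" and e: "e \<in> E" "fst (ends e) = snd (ends e)"
  shows "(\<Sum>f\<in>non_loops E ends. 1 / L f * kirchhoff_contract V E ends L f)
       = (\<Sum>f\<in>non_loops (E - {e}) ends. 1 / L f * kirchhoff_contract V (E - {e}) ends L f)"
proof -
  have NE: "non_loops E ends = non_loops (E - {e}) ends" using e unfolding non_loops_def by auto
  have "kirchhoff_contract V E ends L f = kirchhoff_contract V (E - {e}) ends L f"
    if f: "f \<in> non_loops (E - {e}) ends" for f
  proof -
    have "f \<in> non_loops E ends" "f \<noteq> e" using f NE unfolding non_loops_def by auto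
    moreover have "e \<notin> non_loops (E - {f}) (contract_ends ends f)"
      using e unfolding non_loops_def contract_ends_apply by simp
    ultimately show ?thesis using kirchhoff_contract_Diff[OF w e(1)] by simp
  qed
  then show ?thesis unfolding NE by (intro sum.cong) simp_all
qed

lemma kirchhoff_contract_Diff_non_loop:
  assumes w: "weighted_graph V E ends L" and e: "e \<in> non_loops E ends" and f: "f \<in> non_loops (E - {e}) ends"
  shows "kirchhoff_contract V E ends L f = kirchhoff_contract V (E - {e}) ends L f
     + (if f \<in> non_loops (E - {e}) (contract_ends ends e)
        then 1 / L e * kirchhoff_contract (V - {snd (ends e)}) (E - {e}) (contract_ends ends e) L f else 0)"
proof -
  have eE: "e \<in> E" and fE: "f \<in> non_loops E ends" "f \<noteq> e" using e f unfolding non_loops_def by auto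
  show ?thesis
  proof (cases "f \<in> non_loops (E - {e}) (contract_ends ends e)")
    case True
    then have "e \<in> non_loops (E - {f}) (contract_ends ends f)"
      using non_loops_contract_swap[OF e fE(1)] by simp
    then show ?thesis
      using kirchhoff_contract_Diff[OF w eE fE] kirchhoff_contract_commute[OF w e True] True by simp
  next
    case False
    then have "e \<notin> non_loops (E - {f}) (contract_ends ends f)"
      using non_loops_contract_swap[OF e fE(1)] by simp
    then show ?thesis
      using kirchhoff_contract_Diff[OF w eE fE] False by simp
  qed
qed

lemma sum_kirchhoff_contract_Diff:
  assumes w: "weighted_graph V E ends L" and e: "e \<in> non_loops E ends"
  shows "(\<Sum>f\<in>non_loops E ends. 1 / L f * kirchhoff_contract V E ends L f)
       = 1 / L e * kirchhoff_contract V E ends L e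
       + (\<Sum>f\<in>non_loops (E - {e}) ends. 1 / L f * kirchhoff_contract V (E - {e}) ends L f)
       + 1 / L e * (\<Sum>f\<in>non_loops (E - {e}) (contract_ends ends e).
           1 / L f * kirchhoff_contract (V - {snd (ends e)}) (E - {e}) (contract_ends ends e) L f)"
proof -
  let ?NE = "non_loops (E - {e}) ends" and ?Ne = "non_loops (E - {e}) (contract_ends ends e)"
  let ?k = "\<lambda>f. kirchhoff_contract (V - {snd (ends e)}) (E - {e}) (contract_ends ends e) L f"
  have fin: "finite ?NE" using w unfolding weighted_graph_def non_loops_def by simp
  have NE: "non_loops E ends = insert e ?NE" "e \<notin> ?NE" "?Ne \<subseteq> ?NE"
    using e non_loops_contract_subset[of E e ends] unfolding non_loops_def by auto
  have "(\<Sum>f\<in>?NE. 1 / L f * kirchhoff_contract V E ends L f)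
      = (\<Sum>f\<in>?NE. 1 / L f * kirchhoff_contract V (E - {e}) ends L f
          + 1 / L e * (if f \<in> ?Ne then 1 / L f * ?k f else 0))"
    using kirchhoff_contract_Diff_non_loop[OF w e] by (intro sum.cong) (simp_all add: algebra_simps)
  also have "\<dots> = (\<Sum>f\<in>?NE. 1 / L f * kirchhoff_contract V (E - {e}) ends L f)
        + 1 / L e * (\<Sum>f\<in>?NE. if f \<in> ?Ne then 1 / L f * ?k f else 0)"
    by (simp only: sum.distrib sum_distrib_left)
  also have "(\<Sum>f\<in>?NE. if f \<in> ?Ne then 1 / L f * ?k f else 0) = (\<Sum>f\<in>?Ne. 1 / L f * ?k f)"
    using NE(3) fin by (simp add: sum.If_cases Int_absorb1)
  finally show ?thesis
    unfolding NE(1) using fin NE(2) by simp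
qed

lemma kirchhoff_edgeless:
  assumes w: "weighted_graph V {} ends L" and "q \<in> V" "y \<in> V" "y \<noteq> q"
  shows "kirchhoff V {} ends L = 0"
proof -
  have "finite V" using w unfolding weighted_graph_def by simp
  then show ?thesis
    unfolding kirchhoff_eq_reduced_det[OF w assms(2)] using assms(3,4)
    by (intro det_on_zero_row[of _ y]) (auto simp: laplacian_def wdegree_def edge_conductance_def)
qed

theorem foster_identity:
  assumes "weighted_graph V E ends L" "V \<noteq> {}"
  shows "(\<Sum>e\<in>non_loops E ends. 1 / L e * kirchhoff_contract V E ends L e)
       = (real (card V) - 1) * kirchhoff V E ends L"
proof -
  have "finite E" using assms(1) unfolding weighted_graph_def by simp
  then show ?thesis
    using assms
  proof (induction E arbitrary: V ends rule: finite_induct)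
    case empty
    obtain q where q: "q \<in> V" using empty.prems(2) by auto
    show ?case
    proof (cases "V = {q}")
      case False
      then obtain y where "y \<in> V" "y \<noteq> q" using q by auto
      then show ?thesis
        using kirchhoff_edgeless[OF empty.prems(1) q] unfolding non_loops_def by simp
    qed (simp add: non_loops_def)
  next
    case (insert e E)
    have w: "weighted_graph V (insert e E) ends L" and eE: "e \<in> insert e E"
      and E: "insert e E - {e} = E"
      using insert by auto
    have w0: "weighted_graph V E ends L" using weighted_graph_subset[OF w] by blast
    note IH = insert.IH[OF w0 insert.prems(2)]
    show ?case
    proof (cases "fst (ends e) = snd (ends e)")
      case True
      then show ?thesis
        using sum_kirchhoff_contract_Diff_loop[OF w eE True] kirchhoff_Diff_loop[OF w eE True]
          IH insert.prems(2) unfolding E by simp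
    next
      case False
      let ?V = "V - {snd (ends e)}"
      have e: "e \<in> non_loops (insert e E) ends" using False unfolding non_loops_def by simp
      have we: "weighted_graph ?V E (contract_ends ends e) L"
        using weighted_graph_contract[OF w eE False] unfolding E .
      have V: "snd (ends e) \<in> V" "fst (ends e) \<in> V" "finite V"
        using w unfolding weighted_graph_def by auto
      then have "?V \<noteq> {}" using False by blast
      note IHe = insert.IH[OF we this]
      have card: "real (card ?V) = real (card V) - 1"
        using card_Suc_Diff1[OF V(3,1)] by simp
      have kc: "kirchhoff_contract V (insert e E) ends L e = kirchhoff ?V E (contract_ends ends e) L"
        unfolding kirchhoff_contract_def E ..
      show ?thesis
        unfolding sum_kirchhoff_contract_Diff[OF w e] kirchhoff_deletion_contraction[OF w eE False]
          E kc IH IHe card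
        by (simp add: algebra_simps diff_divide_distrib)
    qed
  qed
qed

section \<open>Effective resistance in a metrized graph\<close>

lemma weighted_graph_metrized: "metrized_graph V E ends L \<Longrightarrow> weighted_graph V E ends L"
  unfolding metrized_graph_def weighted_graph_def by auto

lemma reachable_sym: "reachable E ends x y \<Longrightarrow> reachable E ends y x"
proof -
  have "symp (adj_rel E ends)" by (rule sympI) (auto simp: adj_rel_def)
  then show "reachable E ends x y \<Longrightarrow> reachable E ends y x"
    unfolding reachable_def by (rule sympD[OF symp_rtranclp])
qed

lemma edge_conductance_pos:
  assumes w: "weighted_graph V E ends L" and d: "d \<in> E" "ends d = (u, v) \<or> ends d = (v, u)"
  shows "0 < edge_conductance E ends L u v"
proof -
  have "1 / L d \<le> edge_conductance E ends L u v"
    unfolding edge_conductance_def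
    by (rule member_le_sum) (use w d in \<open>auto simp: weighted_graph_def less_imp_le\<close>)
  moreover have "0 < 1 / L d" using w d unfolding weighted_graph_def by auto
  ultimately show ?thesis by linarith
qed

lemma linked_of_reachable:
  assumes w: "weighted_graph V E ends L" and x: "x \<in> V" and r: "reachable E ends x y"
  shows "(linked V (edge_conductance E ends L))\<^sup>*\<^sup>* x y"
proof -
  have "(adj_rel E ends)\<^sup>*\<^sup>* x y" using r unfolding reachable_def .
  then have "(linked V (edge_conductance E ends L))\<^sup>*\<^sup>* x y \<and> y \<in> V"
  proof (induction rule: rtranclp_induct)
    case base then show ?case using x by simp
  next
    case (step u v)
    obtain d where d: "d \<in> E" "ends d = (u, v) \<or> ends d = (v, u)"
      using step.hyps(2) unfolding adj_rel_def by auto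
    have "v \<in> V" using w d unfolding weighted_graph_def by (metis fst_conv snd_conv)
    moreover have "u = v \<or> linked V (edge_conductance E ends L) u v"
      using step.IH edge_conductance_pos[OF w d] \<open>v \<in> V\<close> unfolding linked_def by auto
    ultimately show ?case using step.IH by (metis rtranclp.rtrancl_into_rtrancl)
  qed
  then show ?thesis ..
qed

lemma reachable_of_linked:
  assumes "(linked V (edge_conductance E ends L))\<^sup>*\<^sup>* x y"
  shows "reachable E ends x y"
  using assms unfolding reachable_def
proof (induction rule: rtranclp_induct)
  case (step u v)
  then have "{d\<in>E. ends d = (u, v) \<or> ends d = (v, u)} \<noteq> {}"
    unfolding linked_def edge_conductance_def by force
  then have "adj_rel E ends u v" unfolding adj_rel_def by auto
  then show ?case using step.IH by (meson rtranclp.rtrancl_into_rtrancl)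
qed simp

lemma connected_network_edge_conductance:
  assumes "weighted_graph V E ends L" "\<forall>x\<in>V. \<forall>y\<in>V. reachable E ends x y"
  shows "connected_network V (edge_conductance E ends L)"
  using linked_of_reachable[OF assms(1)] assms(2) unfolding connected_network_def by blast

lemma energy_eq_energy_form:
  assumes w: "weighted_graph V E ends L"
  shows "energy E ends L f = energy_form V (edge_conductance E ends L) f"
proof -
  have fin: "finite V" "finite E" using w unfolding weighted_graph_def by auto
  let ?k = "\<lambda>d y z. 1 / L d * (f y - f z)\<^sup>2"
  have "(\<Sum>y\<in>V. \<Sum>z\<in>V. edge_conductance E ends L y z * (f y - f z)\<^sup>2)
      = (\<Sum>y\<in>V. \<Sum>z\<in>V. \<Sum>d\<in>E. if ends d = (y, z) \<or> ends d = (z, y) then ?k d y z else 0)"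
    unfolding edge_conductance_def sum_distrib_right
    by (intro sum.cong refl sum.inter_filter fin)
  also have "\<dots> = (\<Sum>y\<in>V. \<Sum>d\<in>E. \<Sum>z\<in>V. if ends d = (y, z) \<or> ends d = (z, y) then ?k d y z else 0)"
    by (rule sum.cong[OF refl]) (rule sum.swap)
  also have "\<dots> = (\<Sum>d\<in>E. \<Sum>y\<in>V. \<Sum>z\<in>V. if ends d = (y, z) \<or> ends d = (z, y) then ?k d y z else 0)"
    by (rule sum.swap)
  also have "\<dots> = (\<Sum>d\<in>E. 2 * ((f (fst (ends d)) - f (snd (ends d)))\<^sup>2 / L d))"
  proof (rule sum.cong[OF refl])
    fix d assume d: "d \<in> E"
    obtain a b where ab: "ends d = (a, b)" by fastforce
    have abV: "a \<in> V" "b \<in> V" using w d ab unfolding weighted_graph_def by force+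
    text \<open>Each edge is counted twice, once in each orientation.\<close>
    have "(if ends d = (y, z) \<or> ends d = (z, y) then ?k d y z else 0)
        = (if z = b then (if y = a then ?k d a b else 0) else 0)
          + (if z = a then (if y = b then ?k d b a else 0) else 0)" for y z
      unfolding ab by (cases "y = a"; cases "z = b"; cases "y = b"; cases "z = a") auto
    then show "(\<Sum>y\<in>V. \<Sum>z\<in>V. if ends d = (y, z) \<or> ends d = (z, y) then ?k d y z else 0)
        = 2 * ((f (fst (ends d)) - f (snd (ends d)))\<^sup>2 / L d)"
      using abV fin(1) unfolding ab by (simp add: sum.distrib power2_commute[of "f b"])
  qed
  also have "\<dots> = 2 * energy E ends L f"
    unfolding energy_def by (rule sum_distrib_left[symmetric])
  finally show ?thesis
    unfolding energy_form_def by simp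
qed

lemma eff_res_eq_det_ratio:
  assumes w: "weighted_graph V E ends L" and conn: "\<forall>x\<in>V. \<forall>y\<in>V. reachable E ends x y"
    and p: "p \<in> V" and q: "q \<in> V" and pq: "p \<noteq> q"
  shows "eff_res E ends L p q
       = det_on (V - {p, q}) (laplacian V (edge_conductance E ends L))
         / det_on (V - {q}) (laplacian V (edge_conductance E ends L))"
proof -
  have "{energy E ends L f | f. f p = 1 \<and> f q = 0}
      = {energy_form V (edge_conductance E ends L) f | f. f p = 1 \<and> f q = 0}"
    using energy_eq_energy_form[OF w] by simp
  then show ?thesis
    unfolding eff_res_def
    using Inf_energy_form[OF network_edge_conductance[OF w]
        connected_network_edge_conductance[OF w conn] p q pq] pq
    by simp
qed

lemma reachable_Diff_non_bridge:
  assumes m: "metrized_graph V E ends L"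
    and r: "reachable (E - {e}) ends (fst (ends e)) (snd (ends e))"
    and x: "x \<in> V" and y: "y \<in> V"
  shows "reachable (E - {e}) ends x y"
proof -
  have "(adj_rel E ends)\<^sup>*\<^sup>* x y" using m x y unfolding metrized_graph_def reachable_def by blast
  then show ?thesis
  proof (induction rule: rtranclp_induct)
    case base then show ?case unfolding reachable_def by simp
  next
    case (step u v)
    obtain d where d: "d \<in> E" "ends d = (u, v) \<or> ends d = (v, u)"
      using step.hyps(2) unfolding adj_rel_def by auto
    have "reachable (E - {e}) ends u v"
    proof (cases "d = e")
      case False
      then have "adj_rel (E - {e}) ends u v" using d unfolding adj_rel_def by auto
      then show ?thesis unfolding reachable_def by simp
    next
      case True
      then show ?thesis using d r reachable_sym[OF r] by (cases "ends e") auto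
    qed
    then show ?case using step.IH unfolding reachable_def by (meson rtranclp_trans)
  qed
qed

lemma metrized_graph_contract:
  assumes m: "metrized_graph V E ends L" and e: "e \<in> E" and nl: "fst (ends e) \<noteq> snd (ends e)"
  shows "metrized_graph (V - {snd (ends e)}) (E - {e}) (contract_ends ends e) L"
proof -
  have w: "weighted_graph V E ends L" using weighted_graph_metrized[OF m] .
  let ?\<phi> = "contract_vertex ends e"
  have reach: "reachable (E - {e}) (contract_ends ends e) (?\<phi> x) (?\<phi> y)" if "x \<in> V" "y \<in> V" for x y
  proof -
    have "(adj_rel E ends)\<^sup>*\<^sup>* x y" using m that unfolding metrized_graph_def reachable_def by blast
    then have "(adj_rel (E - {e}) (contract_ends ends e))\<^sup>*\<^sup>* (?\<phi> x) (?\<phi> y)"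
    proof (induction rule: rtranclp_induct)
      case (step u v)
      obtain d where d: "d \<in> E" "ends d = (u, v) \<or> ends d = (v, u)"
        using step.hyps(2) unfolding adj_rel_def by auto
      have "?\<phi> u = ?\<phi> v \<or> adj_rel (E - {e}) (contract_ends ends e) (?\<phi> u) (?\<phi> v)"
      proof (cases "d = e")
        case True
        then show ?thesis using d unfolding contract_vertex_def by (cases "ends e") auto
      next
        case False
        then show ?thesis using d unfolding adj_rel_def contract_ends_apply by force
      qed
      then show ?case using step.IH by (metis rtranclp.rtrancl_into_rtrancl)
    qed simp
    then show ?thesis unfolding reachable_def .
  qed
  have "?\<phi> x = x" if "x \<in> V - {snd (ends e)}" for x
    using that unfolding contract_vertex_def by simp
  then have "\<forall>x\<in>V - {snd (ends e)}. \<forall>y\<in>V - {snd (ends e)}. reachable (E - {e}) (contract_ends ends e) x y"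
    using reach by (metis DiffD1)
  moreover have "V - {snd (ends e)} \<noteq> {}" using w e nl unfolding weighted_graph_def by force
  ultimately show ?thesis
    using weighted_graph_contract[OF w e nl] unfolding metrized_graph_def weighted_graph_def by blast
qed

lemma kirchhoff_pos:
  assumes m: "metrized_graph V E ends L"
  shows "0 < kirchhoff V E ends L"
proof -
  have w: "weighted_graph V E ends L" using weighted_graph_metrized[OF m] .
  obtain q where q: "q \<in> V" using m unfolding metrized_graph_def by auto
  show ?thesis
  proof (cases "V = {q}")
    case True
    then show ?thesis unfolding kirchhoff_eq_reduced_det[OF w q] by simp
  next
    case False
    then obtain p where "p \<in> V" "p \<noteq> q" using q by auto
    then show ?thesis
      unfolding kirchhoff_eq_reduced_det[OF w q]
      using dirichlet_principle[OF network_edge_conductance[OF w] _ _ q]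
        connected_network_edge_conductance[OF w] m
      unfolding metrized_graph_def det_ratio_is_min_energy_def by blast
  qed
qed

lemma res_ratio_loop: "fst (ends e) = snd (ends e) \<Longrightarrow> res_ratio E ends L e = 0"
  unfolding res_ratio_def eff_res_def reachable_def Let_def by simp

text \<open>For a bridge, both sides are \<open>1\<close>: the reduced Laplacian of the graph with the bridge deleted
  is singular.\<close>

lemma res_ratio_eq_kirchhoff:
  assumes m: "metrized_graph V E ends L" and e: "e \<in> E" and nl: "fst (ends e) \<noteq> snd (ends e)"
  shows "res_ratio E ends L e = 1 / L e * kirchhoff_contract V E ends L e / kirchhoff V E ends L"
proof -
  define a b where "a = fst (ends e)" and "b = snd (ends e)"
  have w: "weighted_graph V E ends L" using weighted_graph_metrized[OF m] .
  have w0: "weighted_graph V (E - {e}) ends L" using weighted_graph_subset[OF w] by blast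
  have ab: "a \<in> V" "b \<in> V" "a \<noteq> b" using w e nl unfolding weighted_graph_def a_def b_def by auto
  have Lpos: "0 < L e" using w e unfolding weighted_graph_def by auto
  let ?c = "edge_conductance (E - {e}) ends L"
  define X Y where "X = det_on (V - {b}) (laplacian V ?c)" and "Y = det_on (V - {a, b}) (laplacian V ?c)"
  have Y: "kirchhoff_contract V E ends L e = Y"
    using kirchhoff_contract_eq_minor_Diff[OF w e nl] unfolding kirchhoff_contract_def Y_def a_def b_def .
  have K: "kirchhoff V E ends L = X + 1 / L e * Y"
    using kirchhoff_deletion_contraction[OF w e nl] kirchhoff_eq_reduced_det[OF w0 ab(2)] Y
    unfolding kirchhoff_contract_def X_def a_def b_def by simp
  show ?thesis
  proof (cases "reachable (E - {e}) ends a b")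
    case True
    have conn: "\<forall>x\<in>V. \<forall>y\<in>V. reachable (E - {e}) ends x y"
      using reachable_Diff_non_bridge[OF m] True unfolding a_def b_def by blast
    have "0 < X" "0 < Y"
      using dirichlet_principle[OF network_edge_conductance[OF w0]
          connected_network_edge_conductance[OF w0 conn] ab]
      unfolding X_def Y_def det_ratio_is_min_energy_def by auto
    moreover have "res_ratio E ends L e = (Y / X) / (L e + Y / X)"
      using True eff_res_eq_det_ratio[OF w0 conn ab] unfolding res_ratio_def Let_def X_def Y_def a_def b_def
      by simp
    ultimately show ?thesis unfolding K Y using Lpos by (simp add: field_simps)
  next
    case False
    have "\<not> (linked V ?c)\<^sup>*\<^sup>* b a"
      using False reachable_of_linked reachable_sym by metis
    then have "X = 0"
      unfolding X_def by (rule reduced_det_disconnected[OF network_edge_conductance[OF w0] ab(2,1)])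
    moreover have "0 < 1 / L e * Y" using kirchhoff_pos[OF m] unfolding K \<open>X = 0\<close> by simp
    then have "Y \<noteq> 0" by auto
    moreover have "res_ratio E ends L e = 1"
      using False unfolding res_ratio_def Let_def a_def b_def by simp
    ultimately show ?thesis unfolding K Y using Lpos by simp
  qed
qed

lemma r_inv_eq_sum_kirchhoff_contract:
  assumes m: "metrized_graph V E ends L"
  shows "r_inv E ends L = (\<Sum>e\<in>non_loops E ends. kirchhoff_contract V E ends L e / kirchhoff V E ends L)"
proof -
  have w: "weighted_graph V E ends L" using weighted_graph_metrized[OF m] .
  then have fin: "finite E" unfolding weighted_graph_def by simp
  have "r_inv E ends L = (\<Sum>e\<in>E. if fst (ends e) \<noteq> snd (ends e)
      then kirchhoff_contract V E ends L e / kirchhoff V E ends L else 0)"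
    unfolding r_inv_def
  proof (rule sum.cong[OF refl])
    fix e assume e: "e \<in> E"
    then have "0 < L e" using w unfolding weighted_graph_def by simp
    then show "L e * res_ratio E ends L e = (if fst (ends e) \<noteq> snd (ends e)
        then kirchhoff_contract V E ends L e / kirchhoff V E ends L else 0)"
      using res_ratio_eq_kirchhoff[OF m e] res_ratio_loop[of ends e E L] by auto
  qed
  also have "\<dots> = (\<Sum>e\<in>non_loops E ends. kirchhoff_contract V E ends L e / kirchhoff V E ends L)"
    unfolding non_loops_def by (rule sum.inter_filter[OF fin, symmetric])
  finally show ?thesis .
qed

section \<open>Contracting two edges\<close>

lemma sum_non_loops_contract_swap:
  assumes fin: "finite E"
  shows "(\<Sum>e\<in>non_loops E ends. \<Sum>f\<in>non_loops (E - {e}) (contract_ends ends e). h e f)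
       = (\<Sum>f\<in>non_loops E ends. \<Sum>e\<in>non_loops (E - {f}) (contract_ends ends f). h e f)"
proof -
  let ?N = "non_loops E ends" and ?P = "\<lambda>e f. f \<in> non_loops (E - {e}) (contract_ends ends e)"
  have finN: "finite ?N" using fin unfolding non_loops_def by simp
  have "non_loops (E - {e}) (contract_ends ends e) = {f\<in>?N. ?P e f}" for e
    using non_loops_contract_subset[of E e ends] by blast
  moreover have "{e\<in>?N. ?P e f} = {e. ?P f e}" if f: "f \<in> ?N" for f
  proof -
    have "e \<in> ?N \<and> ?P e f \<longleftrightarrow> ?P f e" for e
      using f non_loops_contract_subset[of E f ends] non_loops_contract_swap[of e E ends f] by blast
    then show ?thesis by blast
  qed
  ultimately show ?thesis
    using sum.swap_restrict[OF finN finN, of h ?P] by simp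
qed

lemma foster_identity_contract:
  assumes w: "weighted_graph V E ends L" and f: "f \<in> non_loops E ends"
  shows "(\<Sum>e\<in>non_loops (E - {f}) (contract_ends ends f).
          1 / L e * kirchhoff_contract (V - {snd (ends e)}) (E - {e}) (contract_ends ends e) L f)
       = (real (card V) - 2) * kirchhoff_contract V E ends L f"
proof -
  let ?V = "V - {snd (ends f)}" and ?E = "E - {f}" and ?n = "contract_ends ends f"
  have fE: "f \<in> E" "fst (ends f) \<noteq> snd (ends f)" using f unfolding non_loops_def by auto
  have wf: "weighted_graph ?V ?E ?n L" by (rule weighted_graph_contract[OF w fE])
  have V: "finite V" "snd (ends f) \<in> V" "fst (ends f) \<in> ?V"
    using w fE unfolding weighted_graph_def by auto
  have "kirchhoff_contract (V - {snd (ends e)}) (E - {e}) (contract_ends ends e) L f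
      = kirchhoff_contract ?V ?E ?n L e" if e: "e \<in> non_loops ?E ?n" for e
  proof -
    have eE: "e \<in> non_loops E ends" using e non_loops_contract_subset[of E f ends] by blast
    then have "f \<in> non_loops (E - {e}) (contract_ends ends e)"
      using e non_loops_contract_swap[OF eE f] by blast
    with eE show ?thesis by (rule kirchhoff_contract_commute[OF w])
  qed
  then have "(\<Sum>e\<in>non_loops ?E ?n.
          1 / L e * kirchhoff_contract (V - {snd (ends e)}) (E - {e}) (contract_ends ends e) L f)
      = (\<Sum>e\<in>non_loops ?E ?n. 1 / L e * kirchhoff_contract ?V ?E ?n L e)"
    by simp
  also have "\<dots> = (real (card ?V) - 1) * kirchhoff ?V ?E ?n L"
    using foster_identity[OF wf] V(3) by blast
  also have "real (card ?V) = real (card V) - 1"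
    using card_Suc_Diff1[OF V(1,2)] by simp
  finally show ?thesis unfolding kirchhoff_contract_def by simp
qed

lemma sum_kirchhoff_double_contract:
  assumes w: "weighted_graph V E ends L"
  shows "(\<Sum>e\<in>non_loops E ends. \<Sum>f\<in>non_loops (E - {e}) (contract_ends ends e).
            1 / L e * kirchhoff_contract (V - {snd (ends e)}) (E - {e}) (contract_ends ends e) L f)
       = (real (card V) - 2) * (\<Sum>f\<in>non_loops E ends. kirchhoff_contract V E ends L f)"
proof -
  have "finite E" using w unfolding weighted_graph_def by simp
  then have "(\<Sum>e\<in>non_loops E ends. \<Sum>f\<in>non_loops (E - {e}) (contract_ends ends e).
          1 / L e * kirchhoff_contract (V - {snd (ends e)}) (E - {e}) (contract_ends ends e) L f)
      = (\<Sum>f\<in>non_loops E ends. \<Sum>e\<in>non_loops (E - {f}) (contract_ends ends f).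
          1 / L e * kirchhoff_contract (V - {snd (ends e)}) (E - {e}) (contract_ends ends e) L f)"
    by (rule sum_non_loops_contract_swap)
  also have "\<dots> = (\<Sum>f\<in>non_loops E ends. (real (card V) - 2) * kirchhoff_contract V E ends L f)"
    using foster_identity_contract[OF w] by (rule sum.cong[OF refl])
  finally show ?thesis
    by (simp only: sum_distrib_left)
qed

lemma res_ratio_mult_r_inv_contract:
  assumes m: "metrized_graph V E ends L" and e: "e \<in> E"
  shows "res_ratio E ends L e * r_inv (E - {e}) (contract_ends ends e) L
       = (if e \<in> non_loops E ends
          then (\<Sum>f\<in>non_loops (E - {e}) (contract_ends ends e).
                  1 / L e * kirchhoff_contract (V - {snd (ends e)}) (E - {e}) (contract_ends ends e) L f)
               / kirchhoff V E ends L
          else 0)"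
proof (cases "fst (ends e) = snd (ends e)")
  case True
  then show ?thesis using res_ratio_loop[of ends e, OF True] unfolding non_loops_def by simp
next
  case False
  have me: "metrized_graph (V - {snd (ends e)}) (E - {e}) (contract_ends ends e) L"
    by (rule metrized_graph_contract[OF m e False])
  let ?k = "kirchhoff_contract (V - {snd (ends e)}) (E - {e}) (contract_ends ends e) L"
  let ?S = "\<Sum>f\<in>non_loops (E - {e}) (contract_ends ends e). ?k f"
  have pos: "0 < kirchhoff_contract V E ends L e"
    unfolding kirchhoff_contract_def by (rule kirchhoff_pos[OF me])
  have "res_ratio E ends L e * r_inv (E - {e}) (contract_ends ends e) L
      = 1 / L e * kirchhoff_contract V E ends L e / kirchhoff V E ends L
        * (?S / kirchhoff_contract V E ends L e)"
    unfolding res_ratio_eq_kirchhoff[OF m e False] r_inv_eq_sum_kirchhoff_contract[OF me]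
      sum_divide_distrib kirchhoff_contract_def ..
  also have "\<dots> = 1 / L e * ?S / kirchhoff V E ends L"
    using pos by (simp add: field_simps)
  also have "1 / L e * ?S = (\<Sum>f\<in>non_loops (E - {e}) (contract_ends ends e). 1 / L e * ?k f)"
    by (rule sum_distrib_left)
  finally show ?thesis using e False unfolding non_loops_def by simp
qed

theorem theorem3p8:
  fixes V :: "'v set" and E :: "'e set" and ends :: "'e \<Rightarrow> 'v \<times> 'v" and L :: "'e \<Rightarrow> real"
  assumes "metrized_graph V E ends L"
  shows "(real (card V) - 2) * r_inv E ends L =
         (\<Sum>e\<in>E. res_ratio E ends L e * r_inv (E - {e}) (contract_ends ends e) L)"
proof -
  have w: "weighted_graph V E ends L" using weighted_graph_metrized[OF assms] .
  then have fin: "finite E" unfolding weighted_graph_def by simp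
  let ?K = "kirchhoff V E ends L"
  have "(\<Sum>e\<in>E. res_ratio E ends L e * r_inv (E - {e}) (contract_ends ends e) L)
      = (\<Sum>e\<in>non_loops E ends. (\<Sum>f\<in>non_loops (E - {e}) (contract_ends ends e).
           1 / L e * kirchhoff_contract (V - {snd (ends e)}) (E - {e}) (contract_ends ends e) L f) / ?K)"
    unfolding non_loops_def sum.inter_filter[OF fin]
    using res_ratio_mult_r_inv_contract[OF assms] by (intro sum.cong) (simp_all add: non_loops_def)
  also have "\<dots> = (real (card V) - 2) * (\<Sum>f\<in>non_loops E ends. kirchhoff_contract V E ends L f) / ?K"
    unfolding sum_divide_distrib[symmetric] sum_kirchhoff_double_contract[OF w] ..
  also have "\<dots> = (real (card V) - 2) * r_inv E ends L"
    unfolding r_inv_eq_sum_kirchhoff_contract[OF assms] sum_divide_distrib[symmetric] by simp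
  finally show ?thesis ..
qed
end
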